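(* For any stationary $\alpha$-mixing process $\mathbf X$ on $[0,1]^{\mathbb N}$ with distribution $\mu$ and $\alpha$-mixing coefficients $\boldsymbol\alpha$ satisfying $\|\boldsymbol\alpha\|<\infty$, \[\lim_{t\to\infty}\theta_t(\mathbf X)=\|\boldsymbol\alpha\|\quad\mu\text{-almost surely}.\]
   Context: $X_t$ is the $t$-th coordinate. $\alpha(\mathfrak U,\mathfrak V):=\sup_{U\in\mathfrak U,V\in\mathfrak V}|\mu(U\cap V)-\mu(U)\mu(V)|$; $\alpha(m):=\sup_{j}\alpha\big(\sigma(X_1,\dots,X_j),\sigma(X_t:t\ge j+m)\big)$; $\|\boldsymbol\alpha\|:=\sum_m\alpha(m)$; $\alpha$-mixing means $\alpha(m)\to0$. Dyadic sets: $I_{\ell,i}=[i2^{-\ell},(i+1)2^{-\ell})$, $i=0,\dots,2^\ell-1$ (last interval closed); $\Delta_{k,\ell}$ the cubes $I_{\ell,i_1}\times\cdots\times I_{\ell,i_k}$; $\mathcal D_{k,\ell}$ the unions of cubes of $\Delta_{k,\ell}$. Empirical estimator: for $n>m$, $j\in\{1,\dots,n-m\}$, $j':=n-m-j+1$, $\mu_t(\mathbf X,B):=\frac1t\sum_{i=0}^{t-1}\mathbf 1\{(X_{ik+1},\dots,X_{(i+1)k})\in B\}$ for $B\subseteq[0,1]^k$, $\gamma_{t,n}^{m,j}(\mathbf X,A,B):=\frac1t\sum_{i=0}^{t-1}\mathbf 1\{(X_{in+1},\dots,X_{in+j})\in A\}\mathbf 1\{(X_{in+j+m},\dots,X_{(i+1)n})\in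 B\}$, and $\widehat\alpha_{t,n}^{\ell}(\mathbf X,m):=\max_{j}\max_{A\in\mathcal D_{j,\ell},B\in\mathcal D_{j',\ell}}|\gamma_{t,n}^{m,j}(\mathbf X,A,B)-\mu_t(\mathbf X,A)\mu_t(\mathbf X,B)|$. Parameters: $(\ell_t),(n_t)$ non-decreasing unbounded sequences of positive integers; $(M_t)$ increasing sequence of positive integers with $n_t>M_t$; $(\delta_t)$ positive with $\sum_t\delta_t<\infty$; $(\epsilon_t)$ positive with $\epsilon_t\to0$. With $C_{M,\ell,n}:=M\cdot2^{2^{n\ell}+2^{M\ell+1}+1}$, let $\kappa_t:=\lceil C_{M_t,\ell_t,n_t}/(\epsilon_t^2\delta_t)\rceil$ and $\theta_t(\mathbf X):=\sum_{m=1}^{M_t}\widehat\alpha_{\kappa_t,n_t}^{\ell_t}(\mathbf X,m)$. *)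

theory Defs
  imports "HOL-Probability.Probability"
begin

(* Indexing convention: the paper's coordinate X_t (t >= 1) is  x (t - 1)  for a
   sample path  x :: nat => real. *)

definition path_space :: "(nat \<Rightarrow> real) measure" where
  "path_space = PiM UNIV (\<lambda>_. restrict_space borel {0..1::real})"

definition stationary :: "(nat \<Rightarrow> real) measure \<Rightarrow> bool" where
  "stationary \<mu> \<longleftrightarrow> distr \<mu> \<mu> (\<lambda>x i. x (Suc i)) = \<mu>"

definition coord_sigma :: "(nat \<Rightarrow> real) measure \<Rightarrow> nat set \<Rightarrow> (nat \<Rightarrow> real) set set" where
  "coord_sigma \<mu> I = sigma_sets (space \<mu>)
      {(\<lambda>x. x i) -` B \<inter> space \<mu> | i B. i \<in> I \<and> B \<in> sets borel}"

definition alpha_sets :: "(nat \<Rightarrow> real) measure \<Rightarrow> (nat \<Rightarrow> real) set set \<Rightarrow> (nat \<Rightarrow> real) set set \<Rightarrow> real" where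
  "alpha_sets \<mu> \<U> \<V> = (SUP UV \<in> \<U> \<times> \<V>.
      \<bar>measure \<mu> (fst UV \<inter> snd UV) - measure \<mu> (fst UV) * measure \<mu> (snd UV)\<bar>)"

(* alpha(m) = sup_j alpha(sigma(X_1..X_j), sigma(X_t : t >= j+m)), j >= 1;
   with 0-based coordinates and j = k+1: past {..k}, future {k+m..} *)
definition alpha_mix :: "(nat \<Rightarrow> real) measure \<Rightarrow> nat \<Rightarrow> real" where
  "alpha_mix \<mu> m = (SUP k. alpha_sets \<mu> (coord_sigma \<mu> {..k}) (coord_sigma \<mu> {k+m..}))"

definition alpha_norm :: "(nat \<Rightarrow> real) measure \<Rightarrow> real" where
  "alpha_norm \<mu> = (\<Sum>m. alpha_mix \<mu> (Suc m))"

definition alpha_summable :: "(nat \<Rightarrow> real) measure \<Rightarrow> bool" where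
  "alpha_summable \<mu> \<longleftrightarrow> summable (\<lambda>m. alpha_mix \<mu> (Suc m))"

definition dyadic_int :: "nat \<Rightarrow> nat \<Rightarrow> real set" where
  "dyadic_int l i = (if i = 2^l - 1 then {real i / 2^l .. (real i + 1) / 2^l}
                     else {real i / 2^l ..< (real i + 1) / 2^l})"

(* vectors of [0,1]^k are lists of length k *)
definition dyadic_cube :: "nat \<Rightarrow> nat \<Rightarrow> nat list \<Rightarrow> real list set" where
  "dyadic_cube k l c = {v. length v = k \<and> (\<forall>r<k. v ! r \<in> dyadic_int l (c ! r))}"

definition cube_indices :: "nat \<Rightarrow> nat \<Rightarrow> nat list set" where
  "cube_indices k l = {c. length c = k \<and> (\<forall>r<k. c ! r < 2^l)}"

definition Delta :: "nat \<Rightarrow> nat \<Rightarrow> real list set set" where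
  "Delta k l = dyadic_cube k l ` cube_indices k l"

definition Dcal :: "nat \<Rightarrow> nat \<Rightarrow> real list set set" where
  "Dcal k l = {\<Union> S | S. S \<subseteq> Delta k l}"

definition block :: "(nat \<Rightarrow> real) \<Rightarrow> nat \<Rightarrow> nat \<Rightarrow> real list" where
  "block x s k = map (\<lambda>r. x (s + r)) [0..<k]"

definition emp_mu :: "nat \<Rightarrow> (nat \<Rightarrow> real) \<Rightarrow> nat \<Rightarrow> real list set \<Rightarrow> real" where
  "emp_mu t x k B = (1 / real t) * (\<Sum>i<t. indicator B (block x (i*k) k))"

definition emp_gamma :: "nat \<Rightarrow> nat \<Rightarrow> nat \<Rightarrow> nat \<Rightarrow> (nat \<Rightarrow> real) \<Rightarrow> real list set \<Rightarrow> real list set \<Rightarrow> real" where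
  "emp_gamma t n m j x A B = (1 / real t) * (\<Sum>i<t.
      indicator A (block x (i*n) j) * indicator B (block x (i*n + j + m - 1) (n - m - j + 1)))"

definition alpha_hat :: "nat \<Rightarrow> nat \<Rightarrow> nat \<Rightarrow> (nat \<Rightarrow> real) \<Rightarrow> nat \<Rightarrow> real" where
  "alpha_hat t n l x m = Max ((\<lambda>(j, A, B).
        \<bar>emp_gamma t n m j x A B - emp_mu t x j A * emp_mu t x (n - m - j + 1) B\<bar>)
      ` {(j, A, B). j \<in> {1..n-m} \<and> A \<in> Dcal j l \<and> B \<in> Dcal (n - m - j + 1) l})"

definition C_const :: "nat \<Rightarrow> nat \<Rightarrow> nat \<Rightarrow> real" where
  "C_const M l n = real M * 2 ^ (2^(n*l) + 2^(M*l+1) + 1)"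

definition kappa :: "(nat \<Rightarrow> nat) \<Rightarrow> (nat \<Rightarrow> nat) \<Rightarrow> (nat \<Rightarrow> nat) \<Rightarrow> (nat \<Rightarrow> real) \<Rightarrow> (nat \<Rightarrow> real) \<Rightarrow> nat \<Rightarrow> nat" where
  "kappa l n M \<epsilon> \<delta> t = nat \<lceil>C_const (M t) (l t) (n t) / ((\<epsilon> t)^2 * \<delta> t)\<rceil>"

definition theta :: "(nat \<Rightarrow> nat) \<Rightarrow> (nat \<Rightarrow> nat) \<Rightarrow> (nat \<Rightarrow> nat) \<Rightarrow> (nat \<Rightarrow> real) \<Rightarrow> (nat \<Rightarrow> real) \<Rightarrow> nat \<Rightarrow> (nat \<Rightarrow> real) \<Rightarrow> real" where
  "theta l n M \<epsilon> \<delta> t x = (\<Sum>m=1..M t. alpha_hat (kappa l n M \<epsilon> \<delta> t) (n t) (l t) x m)"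

end

theory Submission
  imports Defs
begin

text \<open>
  The estimator \<^const>\<open>alpha_hat\<close> is the largest empirical covariance among finitely many
  pairs of dyadic block events. Its population counterpart \<open>dyadic_alpha\<close>, the same maximum
  with frequencies replaced by probabilities, never exceeds \<open>\<alpha>(m)\<close>, and it tends to \<open>\<alpha>(m)\<close> as
  the block length and the dyadic resolution grow, because dyadic cylinder events approximate
  every event of the coordinate \<open>\<sigma>\<close>-algebras in symmetric-difference measure. By summability
  of \<open>\<alpha>\<close>, the sum of these population coefficients over \<open>m \<le> M\<^sub>t\<close> tends to \<open>\<parallel>\<alpha>\<parallel>\<close>.

  On the other hand, events of distinct length-\<open>n\<close> blocks have covariances bounded by \<open>\<alpha>\<close> of
  their distance, so Chebyshev's inequality bounds the probability that an empirical frequency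
  over \<open>\<kappa>\<^sub>t\<close> blocks deviates by \<open>\<epsilon>\<^sub>t/M\<^sub>t\<close> from its mean by
  \<open>(1 + 2\<parallel>\<alpha>\<parallel>) M\<^sub>t\<^sup>2 / (\<kappa>\<^sub>t \<epsilon>\<^sub>t\<^sup>2)\<close>. A union bound over all frequencies entering \<open>\<theta>\<^sub>t\<close>
  costs a factor that the choice of \<open>\<kappa>\<^sub>t\<close> absorbs, leaving \<open>O(\<delta>\<^sub>t)\<close>; by Borel--Cantelli,
  almost surely \<open>\<theta>\<^sub>t\<close> stays within \<open>3\<epsilon>\<^sub>t\<close> of the population sum for all large \<open>t\<close>.
\<close>

section \<open>Dyadic discretisation\<close>

text \<open>The clamp by \<open>2\<^sup>l - 1\<close> puts \<open>y = 1\<close> into the last, closed interval.\<close>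

definition dyadic_index :: "nat \<Rightarrow> real \<Rightarrow> nat" where
  "dyadic_index l y = nat (min \<lfloor>y * 2^l\<rfloor> (2^l - 1))"

definition unit_cube :: "nat \<Rightarrow> real list set" where
  "unit_cube K = {v. length v = K \<and> (\<forall>r<K. 0 \<le> v!r \<and> v!r \<le> 1)}"

lemma dyadic_index_less: "dyadic_index l y < 2^l"
proof -
  have "min \<lfloor>y * 2^l\<rfloor> (2^l - 1) \<le> 2^l - 1" by simp
  then show ?thesis unfolding dyadic_index_def by (simp add: nat_less_iff)
qed

lemma mem_dyadic_int_iff:
  assumes y: "0 \<le> y" "y \<le> 1" and i: "i < 2^l"
  shows "y \<in> dyadic_int l i \<longleftrightarrow> dyadic_index l y = i"
proof -
  define N :: nat where "N = 2^l"
  define F where "F = \<lfloor>y * 2^l\<rfloor>"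
  have p: "(0::real) < 2^l" by simp
  have NI: "(2::int)^l = int N" by (simp add: N_def)
  have N1: "N \<ge> 1" by (simp add: N_def)
  have F0: "0 \<le> F" unfolding F_def using y by simp
  have index_eq: "dyadic_index l y = i \<longleftrightarrow> min F (int N - 1) = int i"
  proof -
    have "0 \<le> min F (int N - 1)" using F0 N1 by simp
    then show ?thesis unfolding dyadic_index_def F_def[symmetric] NI by (simp add: nat_eq_iff)
  qed
  have lower: "real i / 2^l \<le> y \<longleftrightarrow> int i \<le> F"
    unfolding F_def le_floor_iff using p by (simp add: pos_divide_le_eq)
  have upper: "y < (real i + 1) / 2^l \<longleftrightarrow> F < int i + 1"
    unfolding F_def floor_less_iff using p by (simp add: pos_less_divide_eq)
  show ?thesis
  proof (cases "i = 2^l - 1")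
    case True
    then have iN1: "int i = int N - 1" using N1 by (simp add: N_def of_nat_diff)
    have "(real i + 1) / 2^l = 1" using True p by (simp add: of_nat_diff)
    then have "y \<in> dyadic_int l i \<longleftrightarrow> int i \<le> F"
      using True y lower by (simp add: dyadic_int_def)
    also have "\<dots> \<longleftrightarrow> min F (int N - 1) = int i" using iN1 by (simp add: min_def) presburger
    finally show ?thesis using index_eq by simp
  next
    case False
    then have "i < N - 1" using i by (simp add: N_def)
    then have iN1: "int i < int N - 1" using N1 by linarith
    have "y \<in> dyadic_int l i \<longleftrightarrow> int i \<le> F \<and> F < int i + 1"
      using False lower upper by (simp add: dyadic_int_def)
    also have "\<dots> \<longleftrightarrow> min F (int N - 1) = int i" using iN1 by (auto simp: min_def)
    finally show ?thesis using index_eq by simp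
  qed
qed

lemma dyadic_int_subset_unit_interval:
  assumes "i < 2^l"
  shows "dyadic_int l i \<subseteq> {0..1}"
proof -
  have "real i + 1 \<le> 2^l" using assms
    by (metis Suc_eq_plus1 Suc_leI of_nat_1 of_nat_add of_nat_le_iff of_nat_numeral of_nat_power)
  then have "(real i + 1) / 2^l \<le> 1" by simp
  moreover have "0 \<le> real i / 2^l" by simp
  moreover have "y \<in> dyadic_int l i \<Longrightarrow> real i / 2^l \<le> y \<and> y \<le> (real i + 1) / 2^l" for y
    by (auto simp: dyadic_int_def split: if_splits)
  ultimately show ?thesis by (meson atLeastAtMost_iff order_trans subsetI)
qed

lemma dyadic_cube_eq:
  assumes "c \<in> cube_indices K l"
  shows "dyadic_cube K l c = {v \<in> unit_cube K. map (dyadic_index l) v = c}"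
proof -
  have c: "length c = K" "\<And>r. r < K \<Longrightarrow> c!r < 2^l" using assms by (auto simp: cube_indices_def)
  show ?thesis
  proof (intro set_eqI iffI)
    fix v assume v: "v \<in> dyadic_cube K l c"
    then have v1: "length v = K" "\<And>r. r<K \<Longrightarrow> v!r \<in> dyadic_int l (c!r)"
      by (auto simp: dyadic_cube_def)
    have v2: "0 \<le> v!r \<and> v!r \<le> 1" if "r < K" for r
      using v1(2)[OF that] dyadic_int_subset_unit_interval[OF c(2)[OF that]] by auto
    have "\<And>r. r<K \<Longrightarrow> dyadic_index l (v!r) = c!r" using v1 v2 c mem_dyadic_int_iff by blast
    then show "v \<in> {v \<in> unit_cube K. map (dyadic_index l) v = c}"
      using v1 v2 c by (auto simp: unit_cube_def intro!: nth_equalityI)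
  next
    fix v assume v: "v \<in> {v \<in> unit_cube K. map (dyadic_index l) v = c}"
    then have v1: "length v = K" "\<And>r. r<K \<Longrightarrow> 0 \<le> v!r \<and> v!r \<le> 1" "map (dyadic_index l) v = c"
      by (auto simp: unit_cube_def)
    have "\<And>r. r<K \<Longrightarrow> v!r \<in> dyadic_int l (c!r)" using v1 c mem_dyadic_int_iff by auto
    then show "v \<in> dyadic_cube K l c" using v1 by (auto simp: dyadic_cube_def)
  qed
qed

lemma map_dyadic_index_in_cube_indices:
  "v \<in> unit_cube K \<Longrightarrow> map (dyadic_index l) v \<in> cube_indices K l"
  by (auto simp: unit_cube_def cube_indices_def dyadic_index_less)

lemma dyadic_preimage_in_Dcal: "{v \<in> unit_cube K. map (dyadic_index l) v \<in> Q} \<in> Dcal K l"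
proof -
  define S where "S = dyadic_cube K l ` (Q \<inter> cube_indices K l)"
  have "{v \<in> unit_cube K. map (dyadic_index l) v \<in> Q} = \<Union>S"
  proof (intro set_eqI iffI)
    fix v assume v: "v \<in> {v \<in> unit_cube K. map (dyadic_index l) v \<in> Q}"
    then have c: "map (dyadic_index l) v \<in> Q \<inter> cube_indices K l"
      using map_dyadic_index_in_cube_indices by auto
    then have "v \<in> dyadic_cube K l (map (dyadic_index l) v)"
      using dyadic_cube_eq[of "map (dyadic_index l) v"] v by auto
    then show "v \<in> \<Union>S" using c by (auto simp: S_def)
  next
    fix v assume "v \<in> \<Union>S"
    then obtain c where "c \<in> Q \<inter> cube_indices K l" "v \<in> dyadic_cube K l c" by (auto simp: S_def)
    then show "v \<in> {v \<in> unit_cube K. map (dyadic_index l) v \<in> Q}" using dyadic_cube_eq[of c] by auto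
  qed
  moreover have "S \<subseteq> Delta K l" by (auto simp: S_def Delta_def)
  ultimately show ?thesis by (auto simp: Dcal_def)
qed

lemma empty_in_Dcal: "{} \<in> Dcal K l"
  unfolding Dcal_def by blast

lemma finite_cube_indices: "finite (cube_indices K l)"
  and card_cube_indices: "card (cube_indices K l) = 2^(K*l)"
proof -
  have e: "cube_indices K l = {xs. set xs \<subseteq> {..<2^l} \<and> length xs = K}"
    by (auto simp: cube_indices_def in_set_conv_nth subset_iff)
  show "finite (cube_indices K l)" unfolding e by (rule finite_lists_length_eq) simp
  show "card (cube_indices K l) = 2^(K*l)" unfolding e
    by (subst card_lists_length_eq) (simp_all add: power_mult[symmetric] mult.commute)
qed

lemma finite_Dcal: "finite (Dcal K l)"
  and card_Dcal_le: "card (Dcal K l) \<le> 2^(2^(K*l))"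
proof -
  have fin: "finite (Delta K l)" using finite_cube_indices by (simp add: Delta_def)
  have e: "Dcal K l = Union ` Pow (Delta K l)" by (auto simp: Dcal_def)
  show "finite (Dcal K l)" unfolding e using fin by simp
  have "card (Dcal K l) \<le> card (Pow (Delta K l))" unfolding e using fin by (intro card_image_le) simp
  also have "\<dots> = 2 ^ card (Delta K l)" using fin by (simp add: card_Pow)
  also have "\<dots> \<le> 2 ^ card (cube_indices K l)"
    unfolding Delta_def using finite_cube_indices by (intro power_increasing card_image_le) auto
  finally show "card (Dcal K l) \<le> 2^(2^(K*l))" by (simp add: card_cube_indices)
qed

lemma pred_mult_div_eq:
  fixes a d :: nat
  assumes "1 \<le> a" and "1 \<le> d"
  shows "(d * a - 1) div d = a - 1"
proof (rule div_nat_eqI)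
  have "d * (a - 1) = d * a - d" by (simp add: diff_mult_distrib2)
  then show "d * (a - 1) \<le> d * a - 1" using assms by linarith
  have "d * Suc (a - 1) = d * a" using assms by simp
  then show "d * a - 1 < d * Suc (a - 1)" using assms by (simp add: Suc_le_eq)
qed

lemma dyadic_index_one: "dyadic_index l 1 = 2^l - 1"
  unfolding dyadic_index_def
  by (simp add: min_def nat_diff_distrib' del: of_int_power)
     (metis floor_of_nat nat_int of_nat_numeral of_nat_power)

lemma dyadic_index_coarsen:
  assumes y: "0 \<le> y" "y \<le> 1" and ll: "l \<le> l'"
  shows "dyadic_index l y = dyadic_index l' y div 2^(l'-l)"
proof (cases "y = 1")
  case True
  have e: "(2::nat)^l' = 2^(l'-l) * 2^l" using ll by (simp add: power_add[symmetric])
  have "(2^(l'-l) * 2^l - 1) div 2^(l'-l) = (2^l - 1 :: nat)"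
    by (rule pred_mult_div_eq) simp_all
  then show ?thesis using True by (simp add: dyadic_index_one e)
next
  case False
  then have y1: "y < 1" using y by simp
  have floor_le: "\<lfloor>y * 2^k\<rfloor> \<le> 2^k - 1" for k :: nat
  proof -
    have "y * 2^k < 2^k" using y1 by simp
    then have "\<lfloor>y * 2^k\<rfloor> < 2^k" by (metis floor_less_iff of_int_numeral of_int_power)
    then show ?thesis by simp
  qed
  have index_eq: "dyadic_index k y = nat \<lfloor>y * 2^k\<rfloor>" for k
    unfolding dyadic_index_def using floor_le[of k] by (simp add: min_def)
  have e: "(2::real)^l' = 2^(l'-l) * 2^l" using ll by (simp add: power_add[symmetric])
  have "y * 2^l = y * 2^l' / real_of_int (2^(l'-l))" by (simp add: e)
  then have "\<lfloor>y * 2^l\<rfloor> = \<lfloor>y * 2^l'\<rfloor> div 2^(l'-l)"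
    using floor_divide_real_eq_div[of "2^(l'-l)" "y * 2^l'"] by simp
  moreover have "\<lfloor>y * 2^l'\<rfloor> \<ge> 0" using y by simp
  ultimately show ?thesis unfolding index_eq by (simp add: nat_div_distrib nat_power_eq)
qed

lemma dyadic_index_bounds:
  assumes y: "0 \<le> y" "y \<le> 1"
  shows "y * 2^l - 1 \<le> real (dyadic_index l y)" and "real (dyadic_index l y) \<le> y * 2^l"
proof -
  define F where "F = \<lfloor>y * 2^l\<rfloor>"
  have F0: "0 \<le> F" unfolding F_def using y by simp
  have F1: "real_of_int F \<le> y * 2^l" "y * 2^l < real_of_int F + 1" unfolding F_def by linarith+
  have yl: "y * 2^l \<le> 2^l" using y by simp
  have e: "real (dyadic_index l y) = real_of_int (min F (2^l - 1))"
    unfolding dyadic_index_def F_def[symmetric] using F0 by simp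
  have "y * 2^l - 1 \<le> real (dyadic_index l y) \<and> real (dyadic_index l y) \<le> y * 2^l"
  proof (cases "F \<le> 2^l - 1")
    case True
    then show ?thesis using e F1 by (simp add: min_def)
  next
    case False
    then have "real (dyadic_index l y) = 2^l - 1" using e by (simp add: min_def)
    moreover have "real_of_int F \<ge> 2^l"
    proof -
      have "F \<ge> 2^l" using False by linarith
      then have "real_of_int F \<ge> real_of_int (2^l)" by (simp only: of_int_le_iff)
      then show ?thesis by simp
    qed
    ultimately show ?thesis using F1 yl by linarith
  qed
  then show "y * 2^l - 1 \<le> real (dyadic_index l y)" and "real (dyadic_index l y) \<le> y * 2^l"
    by auto
qed

lemma le_iff_dyadic_endpoints_le:
  assumes y: "0 \<le> y" "y \<le> 1"
  shows "y \<le> a \<longleftrightarrow> (\<forall>l. real (dyadic_index l y) / 2^l \<le> a)"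
proof
  assume "y \<le> a"
  show "\<forall>l. real (dyadic_index l y) / 2^l \<le> a"
  proof
    fix l
    have "real (dyadic_index l y) \<le> y * 2^l" using dyadic_index_bounds[OF y] by blast
    also have "y * 2^l \<le> a * 2^l" using \<open>y \<le> a\<close> by simp
    finally show "real (dyadic_index l y) / 2^l \<le> a" by (simp add: divide_le_eq)
  qed
next
  assume H: "\<forall>l. real (dyadic_index l y) / 2^l \<le> a"
  show "y \<le> a"
  proof (rule ccontr)
    assume "\<not> y \<le> a"
    then obtain l where l: "(1/2)^l < y - a" using real_arch_pow_inv[of "y - a" "1/2"] by auto
    have "(y * 2^l - 1) / 2^l \<le> real (dyadic_index l y) / 2^l"
      using dyadic_index_bounds(1)[OF y] by (intro divide_right_mono) simp_all
    moreover have "(y * 2^l - 1) / 2^l = y - (1/2)^l"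
      by (simp add: diff_divide_distrib power_one_over)
    ultimately show False using H[rule_format, of l] l by linarith
  qed
qed

text \<open>The triples \<open>(j, A, B)\<close> over which \<^const>\<open>alpha_hat\<close> maximises: \<open>A\<close> tests the first \<open>j\<close>
  coordinates of a length-\<open>n\<close> block, \<open>B\<close> its last \<open>n - m - j + 1\<close> coordinates.\<close>

definition test_triples :: "nat \<Rightarrow> nat \<Rightarrow> nat \<Rightarrow> (nat \<times> real list set \<times> real list set) set" where
  "test_triples n l m = {(j, A, B). j \<in> {1..n-m} \<and> A \<in> Dcal j l \<and> B \<in> Dcal (n - m - j + 1) l}"

lemma finite_test_triples: "finite (test_triples n l m)"
proof (rule finite_subset)
  show "test_triples n l m \<subseteq> Sigma {1..n-m} (\<lambda>j. Dcal j l \<times> Dcal (n - m - j + 1) l)"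
    by (auto simp: test_triples_def)
  show "finite (Sigma {1..n-m} (\<lambda>j. Dcal j l \<times> Dcal (n - m - j + 1) l))"
    by (intro finite_SigmaI finite_cartesian_product finite_Dcal) simp
qed

lemma empty_test_triple: "m < n \<Longrightarrow> (1, {}, {}) \<in> test_triples n l m"
  by (auto simp: test_triples_def empty_in_Dcal)

section \<open>Averages of weakly dependent indicators\<close>

definition indicator_average :: "nat \<Rightarrow> (nat \<Rightarrow> 'a set) \<Rightarrow> 'a \<Rightarrow> real" where
  "indicator_average t E x = (1 / real t) * (\<Sum>i<t. indicator (E i) x)"

lemma indicator_average_bounds:
  assumes "0 < t"
  shows "0 \<le> indicator_average t E x" and "indicator_average t E x \<le> 1"
proof -
  have "(\<Sum>i<t. indicator (E i) x :: real) \<le> (\<Sum>i<t. 1)" by (rule sum_mono) (simp add: indicator_def)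
  moreover have "0 \<le> (\<Sum>i<t. indicator (E i) x :: real)" by (rule sum_nonneg) simp
  ultimately show "0 \<le> indicator_average t E x" and "indicator_average t E x \<le> 1"
    using assms by (simp_all add: indicator_average_def field_simps)
qed

lemma sum_abs_le_one_plus_two_suminf:
  fixes c \<beta> :: "nat \<Rightarrow> real"
  assumes it: "i < t" and ci: "\<bar>c i\<bar> \<le> 1"
    and before: "\<And>k. k < i \<Longrightarrow> \<bar>c k\<bar> \<le> \<beta> (i - k)"
    and after: "\<And>k. i < k \<Longrightarrow> k < t \<Longrightarrow> \<bar>c k\<bar> \<le> \<beta> (k - i)"
    and \<beta>0: "\<And>d. 0 \<le> \<beta> d" and summable: "summable (\<lambda>d. \<beta> (Suc d))"
  shows "(\<Sum>k<t. \<bar>c k\<bar>) \<le> 1 + 2 * (\<Sum>d. \<beta> (Suc d))"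
proof -
  have partial_le: "(\<Sum>k\<in>F. \<beta> (Suc (h k))) \<le> (\<Sum>d. \<beta> (Suc d))" if "finite F" "inj_on h F" for F h
  proof -
    have "(\<Sum>k\<in>F. \<beta> (Suc (h k))) = (\<Sum>d\<in>h ` F. \<beta> (Suc d))" using sum.reindex[OF that(2), of "\<lambda>d. \<beta> (Suc d)"] by simp
    also have "\<dots> \<le> (\<Sum>d. \<beta> (Suc d))" by (rule sum_le_suminf) (use that summable \<beta>0 in auto)
    finally show ?thesis .
  qed
  have e: "{..<t} = insert i ({..<i} \<union> {i<..<t})" using it by auto
  have "(\<Sum>k<t. \<bar>c k\<bar>) = \<bar>c i\<bar> + ((\<Sum>k<i. \<bar>c k\<bar>) + (\<Sum>k\<in>{i<..<t}. \<bar>c k\<bar>))"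
    unfolding e by (subst sum.insert) (auto intro: sum.union_disjoint)
  also have "(\<Sum>k<i. \<bar>c k\<bar>) \<le> (\<Sum>k<i. \<beta> (Suc (i - Suc k)))"
    by (rule sum_mono) (use before in \<open>auto simp: Suc_diff_Suc\<close>)
  also have "\<dots> \<le> (\<Sum>d. \<beta> (Suc d))" by (rule partial_le) (auto simp: inj_on_def)
  also have "(\<Sum>k\<in>{i<..<t}. \<bar>c k\<bar>) \<le> (\<Sum>k\<in>{i<..<t}. \<beta> (Suc (k - Suc i)))"
    by (rule sum_mono) (use after in \<open>auto simp: Suc_diff_Suc\<close>)
  also have "\<dots> \<le> (\<Sum>d. \<beta> (Suc d))" by (rule partial_le) (auto simp: inj_on_def)
  finally show ?thesis using ci by linarith
qed

context prob_space
begin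

lemma integrable_indicator_event: "A \<in> events \<Longrightarrow> integrable M (indicator A :: 'a \<Rightarrow> real)"
  by (rule integrable_real_indicator) (auto simp: less_top[symmetric])

lemma centered_indicator_product_eq:
  "(indicator A x - p) * (indicator B x - p) =
    indicator (A \<inter> B) x - p * indicator A x - p * indicator B x + p * (p :: real)"
  by (auto simp: indicator_def algebra_simps)

lemma integrable_centered_indicator_product:
  assumes "A \<in> events" "B \<in> events"
  shows "integrable M (\<lambda>x. (indicator A x - p) * (indicator B x - p) :: real)"
  unfolding centered_indicator_product_eq using assms
  by (intro Bochner_Integration.integrable_add Bochner_Integration.integrable_diff
      integrable_mult_right integrable_indicator_event) auto

lemma integral_centered_indicator_product:
  assumes "A \<in> events" "B \<in> events"
  shows "(\<integral>x. (indicator A x - p) * (indicator B x - p) \<partial>M) = prob (A \<inter> B) - p * prob A - p * prob B + p * p"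
  unfolding centered_indicator_product_eq using assms
  by (simp add: integrable_indicator_event Int_absorb2 sets.sets_into_space prob_space)

lemma variance_indicator_average:
  assumes t: "0 < t" and E: "\<And>i. i < t \<Longrightarrow> E i \<in> events" and pE: "\<And>i. i < t \<Longrightarrow> prob (E i) = p"
  shows "expectation (indicator_average t E) = p"
    and "variance (indicator_average t E) = (1 / real t)\<^sup>2 * (\<Sum>i<t. \<Sum>k<t. prob (E i \<inter> E k) - p * p)"
proof -
  let ?f = "indicator_average t E"
  let ?c = "\<lambda>i k x. (indicator (E i) x - p) * (indicator (E k) x - p) :: real"
  have cint: "integrable M (?c i k)" if "i < t" "k < t" for i k
    using E that by (intro integrable_centered_indicator_product) auto
  show Ef: "expectation ?f = p"
  proof -
    have "expectation ?f = (1 / real t) * (\<Sum>i<t. prob (E i))"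
      unfolding indicator_average_def using E
      by (simp add: Bochner_Integration.integral_sum integrable_indicator_event Int_absorb2
          sets.sets_into_space)
    also have "\<dots> = p" using pE t by simp
    finally show ?thesis .
  qed
  have sq: "(?f x - p)\<^sup>2 = (1 / real t)\<^sup>2 * (\<Sum>i<t. \<Sum>k<t. ?c i k x)" for x
  proof -
    have "?f x - p = (1 / real t) * (\<Sum>i<t. (indicator (E i) x - p))"
      unfolding indicator_average_def using t by (simp add: sum_subtractf field_simps)
    then show ?thesis by (simp add: power2_eq_square sum_product algebra_simps)
  qed
  have "variance ?f = (1 / real t)\<^sup>2 * (\<integral>x. (\<Sum>i<t. \<Sum>k<t. ?c i k x) \<partial>M)"
    unfolding Ef sq by simp
  also have "(\<integral>x. (\<Sum>i<t. \<Sum>k<t. ?c i k x) \<partial>M) = (\<Sum>i<t. \<Sum>k<t. \<integral>x. ?c i k x \<partial>M)"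
  proof -
    have "(\<integral>x. (\<Sum>i<t. \<Sum>k<t. ?c i k x) \<partial>M) = (\<Sum>i<t. \<integral>x. (\<Sum>k<t. ?c i k x) \<partial>M)"
      by (rule Bochner_Integration.integral_sum) (use cint in \<open>auto intro!: Bochner_Integration.integrable_sum\<close>)
    also have "\<dots> = (\<Sum>i<t. \<Sum>k<t. \<integral>x. ?c i k x \<partial>M)"
      by (intro sum.cong refl Bochner_Integration.integral_sum) (use cint in auto)
    finally show ?thesis .
  qed
  also have "\<dots> = (\<Sum>i<t. \<Sum>k<t. prob (E i \<inter> E k) - p * p)"
    using E pE by (simp add: integral_centered_indicator_product)
  finally show "variance ?f = (1 / real t)\<^sup>2 * (\<Sum>i<t. \<Sum>k<t. prob (E i \<inter> E k) - p * p)" .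
qed

lemma variance_indicator_average_le:
  fixes E :: "nat \<Rightarrow> 'a set" and \<beta> :: "nat \<Rightarrow> real"
  assumes t: "0 < t" and E: "\<And>i. i < t \<Longrightarrow> E i \<in> events"
    and pE: "\<And>i. i < t \<Longrightarrow> prob (E i) = p"
    and cov: "\<And>i k. i < k \<Longrightarrow> k < t \<Longrightarrow> \<bar>prob (E i \<inter> E k) - p * p\<bar> \<le> \<beta> (k - i)"
    and \<beta>0: "\<And>d. 0 \<le> \<beta> d" and summable: "summable (\<lambda>d. \<beta> (Suc d))"
  shows "variance (indicator_average t E) \<le> (1 + 2 * (\<Sum>d. \<beta> (Suc d))) / real t"
proof -
  define S where "S = (\<Sum>d. \<beta> (Suc d))"
  define c where "c i k = prob (E i \<inter> E k) - p * p" for i k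
  have row: "(\<Sum>k<t. \<bar>c i k\<bar>) \<le> 1 + 2 * S" if i: "i < t" for i
    unfolding S_def
  proof (rule sum_abs_le_one_plus_two_suminf[OF i _ _ _ \<beta>0 summable])
    have "0 \<le> p" "p \<le> 1" using pE[OF i] by auto
    then have "0 \<le> p - p * p" "p - p * p \<le> 1"
      using mult_left_le_one_le[of p p] mult_nonneg_nonneg[of p p] by linarith+
    then show "\<bar>c i i\<bar> \<le> 1" using pE[OF i] by (simp add: c_def)
    show "\<bar>c i k\<bar> \<le> \<beta> (i - k)" if "k < i" for k
      using cov[of k i] that i by (simp add: c_def Int_commute)
    show "\<bar>c i k\<bar> \<le> \<beta> (k - i)" if "i < k" "k < t" for k
      using cov[of i k] that by (simp add: c_def)
  qed
  have "(\<Sum>i<t. \<Sum>k<t. c i k) \<le> (\<Sum>i<t. \<Sum>k<t. \<bar>c i k\<bar>)" by (intro sum_mono) simp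
  also have "\<dots> \<le> (\<Sum>i<t. 1 + 2 * S)" by (rule sum_mono) (use row in simp)
  finally have "(\<Sum>i<t. \<Sum>k<t. c i k) \<le> real t * (1 + 2 * S)" by simp
  then have "(1 / real t)\<^sup>2 * (\<Sum>i<t. \<Sum>k<t. c i k) \<le> (1 / real t)\<^sup>2 * (real t * (1 + 2 * S))"
    by (rule mult_left_mono) simp
  then have "variance (indicator_average t E) \<le> (1 / real t)\<^sup>2 * (real t * (1 + 2 * S))"
    using variance_indicator_average(2)[OF t E pE] by (simp add: c_def)
  also have "\<dots> = (1 + 2 * S) / real t" using t by (simp add: power2_eq_square field_simps)
  finally show ?thesis unfolding S_def .
qed

lemma prob_indicator_average_deviation_le:
  fixes E :: "nat \<Rightarrow> 'a set" and \<beta> :: "nat \<Rightarrow> real"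
  assumes t: "0 < t" and E: "\<And>i. i < t \<Longrightarrow> E i \<in> events"
    and pE: "\<And>i. i < t \<Longrightarrow> prob (E i) = p"
    and cov: "\<And>i k. i < k \<Longrightarrow> k < t \<Longrightarrow> \<bar>prob (E i \<inter> E k) - p * p\<bar> \<le> \<beta> (k - i)"
    and \<beta>0: "\<And>d. 0 \<le> \<beta> d" and summable: "summable (\<lambda>d. \<beta> (Suc d))" and \<eta>: "0 < \<eta>"
  shows "prob {x \<in> space M. \<eta> \<le> \<bar>indicator_average t E x - p\<bar>}
    \<le> (1 + 2 * (\<Sum>d. \<beta> (Suc d))) / (real t * \<eta>\<^sup>2)"
proof -
  let ?f = "indicator_average t E"
  have measurable: "?f \<in> borel_measurable M"
    unfolding indicator_average_def using E
    by (intro borel_measurable_times borel_measurable_const borel_measurable_sum borel_measurable_indicator) auto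
  have "integrable M (\<lambda>x. ?f x ^ 2)"
  proof (rule integrable_const_bound[where B = 1])
    show "AE x in M. norm (?f x ^ 2) \<le> 1"
    proof (rule AE_I2)
      fix x
      have "0 \<le> ?f x" "?f x \<le> 1" by (rule indicator_average_bounds[OF t])+
      then show "norm (?f x ^ 2) \<le> 1" by (simp add: power_le_one)
    qed
  qed (use measurable in simp)
  then have "prob {x \<in> space M. \<eta> \<le> \<bar>?f x - expectation ?f\<bar>} \<le> variance ?f / \<eta>\<^sup>2"
    by (rule Chebyshev_inequality[OF measurable _ \<eta>])
  also have "\<dots> \<le> ((1 + 2 * (\<Sum>d. \<beta> (Suc d))) / real t) / \<eta>\<^sup>2"
    using variance_indicator_average_le[OF t E pE cov \<beta>0 summable] by (intro divide_right_mono) simp_all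
  finally show ?thesis
    using variance_indicator_average(1)[OF t E pE] by (simp add: field_simps)
qed

end

section \<open>Approximation in symmetric difference\<close>

lemma abs_mult_diff_le:
  fixes a b a' b' :: real
  assumes "0 \<le> b" "b \<le> 1" "0 \<le> a'" "a' \<le> 1"
  shows "\<bar>a * b - a' * b'\<bar> \<le> \<bar>a - a'\<bar> + \<bar>b - b'\<bar>"
proof -
  have "a * b - a' * b' = (a - a') * b + a' * (b - b')" by (simp add: algebra_simps)
  then have "\<bar>a * b - a' * b'\<bar> \<le> \<bar>a - a'\<bar> * b + a' * \<bar>b - b'\<bar>"
    using assms by (simp add: abs_mult) (metis abs_mult abs_of_nonneg abs_triangle_ineq)
  also have "\<dots> \<le> \<bar>a - a'\<bar> * 1 + 1 * \<bar>b - b'\<bar>"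
    using assms by (intro add_mono mult_mono) auto
  finally show ?thesis by simp
qed

context prob_space
begin

lemma abs_prob_diff_le_prob_sym_diff:
  assumes "A \<in> events" "B \<in> events"
  shows "\<bar>prob A - prob B\<bar> \<le> prob (sym_diff A B)"
proof -
  have "prob A \<le> prob (B \<union> (A - B))" by (rule finite_measure_mono) (use assms in auto)
  also have "\<dots> \<le> prob B + prob (A - B)" by (rule measure_Un_le) (use assms in auto)
  also have "prob (A - B) \<le> prob (sym_diff A B)" by (rule finite_measure_mono) (use assms in auto)
  moreover have "prob B \<le> prob (A \<union> (B - A))" by (rule finite_measure_mono) (use assms in auto)
  moreover have "\<dots> \<le> prob A + prob (B - A)" by (rule measure_Un_le) (use assms in auto)
  moreover have "prob (B - A) \<le> prob (sym_diff A B)" by (rule finite_measure_mono) (use assms in auto)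
  ultimately show ?thesis by linarith
qed

lemma abs_covariance_le_1: "\<bar>prob (U \<inter> V) - prob U * prob V\<bar> \<le> 1"
proof -
  have "0 \<le> prob (U \<inter> V)" "prob (U \<inter> V) \<le> 1" "0 \<le> prob U * prob V" "prob U * prob V \<le> 1"
    by (simp_all add: mult_le_one)
  then show ?thesis by linarith
qed

lemma abs_covariance_diff_le:
  assumes U: "U \<in> events" "G \<in> events" and V: "V \<in> events" "H \<in> events"
  shows "\<bar>(prob (U \<inter> V) - prob U * prob V) - (prob (G \<inter> H) - prob G * prob H)\<bar>
    \<le> 2 * prob (sym_diff U G) + 2 * prob (sym_diff V H)"
proof -
  have "\<bar>prob (U \<inter> V) - prob (G \<inter> H)\<bar> \<le> prob (sym_diff (U \<inter> V) (G \<inter> H))"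
    by (rule abs_prob_diff_le_prob_sym_diff) (use U V in auto)
  also have "\<dots> \<le> prob (sym_diff U G \<union> sym_diff V H)"
    by (rule finite_measure_mono) (use U V in auto)
  also have "\<dots> \<le> prob (sym_diff U G) + prob (sym_diff V H)"
    by (rule measure_Un_le) (use U V in auto)
  finally have "\<bar>prob (U \<inter> V) - prob (G \<inter> H)\<bar> \<le> prob (sym_diff U G) + prob (sym_diff V H)" .
  moreover have "\<bar>prob U * prob V - prob G * prob H\<bar> \<le> \<bar>prob U - prob G\<bar> + \<bar>prob V - prob H\<bar>"
    by (rule abs_mult_diff_le) auto
  moreover have "\<bar>prob U - prob G\<bar> \<le> prob (sym_diff U G)" "\<bar>prob V - prob H\<bar> \<le> prob (sym_diff V H)"
    using U V by (simp_all add: abs_prob_diff_le_prob_sym_diff)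
  ultimately show ?thesis by linarith
qed

lemma prob_sym_diff_UN_le:
  fixes A G :: "nat \<Rightarrow> 'a set"
  assumes A: "\<And>i. A i \<in> events" and G: "\<And>i. G i \<in> events"
  shows "prob (sym_diff (\<Union>i. A i) (\<Union>i<n. G i))
    \<le> prob ((\<Union>i. A i) - (\<Union>i<n. A i)) + (\<Sum>i<n. prob (sym_diff (A i) (G i)))"
proof -
  have tail: "(\<Union>i. A i) - (\<Union>i<n. A i) \<in> events"
    using A by auto
  have errors: "(\<Union>i<n. sym_diff (A i) (G i)) \<in> events" using A G by auto
  have "prob (sym_diff (\<Union>i. A i) (\<Union>i<n. G i))
      \<le> prob (((\<Union>i. A i) - (\<Union>i<n. A i)) \<union> (\<Union>i<n. sym_diff (A i) (G i)))"
    by (rule finite_measure_mono) (use tail errors in auto)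
  also have "\<dots> \<le> prob ((\<Union>i. A i) - (\<Union>i<n. A i)) + prob (\<Union>i<n. sym_diff (A i) (G i))"
    using tail errors by (rule measure_Un_le)
  also have "prob (\<Union>i<n. sym_diff (A i) (G i)) \<le> (\<Sum>i<n. prob (sym_diff (A i) (G i)))"
    by (rule measure_UNION_le) (use A G in auto)
  finally show ?thesis by simp
qed

lemma sigma_sets_approximation:
  assumes sub: "\<A> \<subseteq> events" and empty: "{} \<in> \<A>"
    and compl: "\<And>a. a \<in> \<A> \<Longrightarrow> space M - a \<in> \<A>"
    and union: "\<And>a b. a \<in> \<A> \<Longrightarrow> b \<in> \<A> \<Longrightarrow> a \<union> b \<in> \<A>"
  shows "U \<in> sigma_sets (space M) \<A> \<Longrightarrow> 0 < \<epsilon> \<Longrightarrow> \<exists>G\<in>\<A>. prob (sym_diff U G) < \<epsilon>"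
proof (induction arbitrary: \<epsilon> rule: sigma_sets.induct)
  case (Basic a)
  then show ?case by (intro bexI[of _ a]) auto
next
  case Empty
  then show ?case using empty by (intro bexI[of _ "{}"]) auto
next
  case (Compl a)
  obtain G where G: "G \<in> \<A>" "prob (sym_diff a G) < \<epsilon>" using Compl by blast
  have "a \<subseteq> space M" using Compl(1) sigma_sets_into_sp[of \<A> "space M"] sub sets.sets_into_space
    by blast
  moreover have "G \<subseteq> space M" using G sub sets.sets_into_space by blast
  ultimately have "sym_diff (space M - a) (space M - G) = sym_diff a G" by blast
  then show ?case using G compl by (intro bexI[of _ "space M - G"]) auto
next
  case (Union A)
  have A: "\<And>i. A i \<in> events" using Union(1) sets.sigma_sets_subset[OF sub] by blast
  have "(\<lambda>n. prob ((\<Union>i. A i) - (\<Union>i<n. A i))) \<longlonglongrightarrow> prob (\<Inter>n. (\<Union>i. A i) - (\<Union>i<n. A i))"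
    by (rule finite_Lim_measure_decseq) (use A in \<open>auto simp: decseq_def\<close>)
  moreover have "(\<Inter>n. (\<Union>i. A i) - (\<Union>i<n. A i)) = {}" by blast
  ultimately have "(\<lambda>n. prob ((\<Union>i. A i) - (\<Union>i<n. A i))) \<longlonglongrightarrow> 0"
    by (metis measure_empty)
  from order_tendstoD(2)[OF this, of "\<epsilon>/2"] Union(3)
  obtain n where n: "prob ((\<Union>i. A i) - (\<Union>i<n. A i)) < \<epsilon>/2"
    by (auto simp: eventually_sequentially)
  define \<epsilon>' where "\<epsilon>' = \<epsilon> / (2 * real (Suc n))"
  have "0 < \<epsilon>'" using Union(3) by (simp add: \<epsilon>'_def)
  then obtain G where G: "\<And>i. G i \<in> \<A>" "\<And>i. prob (sym_diff (A i) (G i)) < \<epsilon>'"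
    using Union(2) by metis
  have G_union: "(\<Union>i<k. G i) \<in> \<A>" for k
    by (induction k) (simp_all add: lessThan_Suc empty union G(1))
  have "prob (sym_diff (\<Union>i. A i) (\<Union>i<n. G i))
      \<le> prob ((\<Union>i. A i) - (\<Union>i<n. A i)) + (\<Sum>i<n. prob (sym_diff (A i) (G i)))"
    by (rule prob_sym_diff_UN_le) (use A G sub in auto)
  also have "(\<Sum>i<n. prob (sym_diff (A i) (G i))) \<le> (\<Sum>i<n. \<epsilon>')"
    by (rule sum_mono) (use G(2) in \<open>simp add: less_imp_le\<close>)
  also have "(\<Sum>i<n. \<epsilon>') \<le> \<epsilon> / 2"
    using Union(3) by (simp add: \<epsilon>'_def field_simps)
  finally have "prob (sym_diff (\<Union>i. A i) (\<Union>i<n. G i)) < \<epsilon>" using n by linarith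
  then show ?case using G_union by blast
qed

end

section \<open>Stationary processes on the unit interval\<close>

locale path_process =
  fixes \<mu> :: "(nat \<Rightarrow> real) measure"
  assumes is_prob_space: "prob_space \<mu>" and sets_eq_path_space: "sets \<mu> = sets path_space"
    and is_stationary: "stationary \<mu>"
begin

sublocale prob_space \<mu> by (rule is_prob_space)

lemma space_eq_unit_paths: "space \<mu> = (\<Pi>\<^sub>E i\<in>UNIV. {0..1::real})"
proof -
  have "space \<mu> = space path_space" using sets_eq_path_space by (rule sets_eq_imp_space_eq)
  then show ?thesis by (simp add: path_space_def space_PiM space_restrict_space)
qed

lemma path_in_unit_interval: "x \<in> space \<mu> \<Longrightarrow> 0 \<le> x i \<and> x i \<le> 1"
  using space_eq_unit_paths by auto

lemma measurable_coordinate: "(\<lambda>x. x i) \<in> borel_measurable \<mu>"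
proof -
  have "(\<lambda>x. x i) \<in> measurable path_space (restrict_space borel {0..1::real})"
    unfolding path_space_def by (rule measurable_component_singleton) simp
  moreover have "(\<lambda>y::real. y) \<in> measurable (restrict_space borel {0..1}) borel"
    by (rule measurable_restrict_space1) simp
  ultimately have "(\<lambda>x. x i) \<in> measurable path_space borel"
    using measurable_comp[of "\<lambda>x. x i" path_space _ "\<lambda>y. y"] by (simp add: comp_def)
  moreover have "measurable \<mu> (borel :: real measure) = measurable path_space borel"
    by (rule measurable_cong_sets[OF sets_eq_path_space refl])
  ultimately show ?thesis by simp
qed

lemma sigma_algebra_coord_sigma: "sigma_algebra (space \<mu>) (coord_sigma \<mu> I)"
  unfolding coord_sigma_def by (rule sigma_algebra_sigma_sets) auto

lemma coord_sigma_subset_events: "coord_sigma \<mu> I \<subseteq> events"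
  unfolding coord_sigma_def
  by (rule sets.sigma_sets_subset) (auto intro: measurable_sets[OF measurable_coordinate])

lemma coord_sigma_mono: "I \<subseteq> J \<Longrightarrow> coord_sigma \<mu> I \<subseteq> coord_sigma \<mu> J"
  unfolding coord_sigma_def by (rule sigma_sets_mono') blast

lemma coordinate_event_in_coord_sigma:
  assumes "i \<in> I" "B \<in> sets borel"
  shows "{x \<in> space \<mu>. x i \<in> B} \<in> coord_sigma \<mu> I"
proof -
  have "(\<lambda>x. x i) -` B \<inter> space \<mu> \<in> coord_sigma \<mu> I"
    unfolding coord_sigma_def using assms by (intro sigma_sets.Basic) blast
  moreover have "(\<lambda>x. x i) -` B \<inter> space \<mu> = {x \<in> space \<mu>. x i \<in> B}" by auto
  ultimately show ?thesis by simp
qed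

lemma cylinder_in_coord_sigma:
  assumes "finite F" "\<And>r. r \<in> F \<Longrightarrow> g r \<in> I" "\<And>r. r \<in> F \<Longrightarrow> D r \<in> sets borel"
  shows "{x \<in> space \<mu>. \<forall>r\<in>F. x (g r) \<in> D r} \<in> coord_sigma \<mu> I"
  using assms
proof (induction F rule: finite_induct)
  case empty
  interpret sigma_algebra "space \<mu>" "coord_sigma \<mu> I" by (rule sigma_algebra_coord_sigma)
  show ?case using top by simp
next
  case (insert a F)
  interpret sigma_algebra "space \<mu>" "coord_sigma \<mu> I" by (rule sigma_algebra_coord_sigma)
  have "{x \<in> space \<mu>. \<forall>r\<in>insert a F. x (g r) \<in> D r} =
      {x \<in> space \<mu>. x (g a) \<in> D a} \<inter> {x \<in> space \<mu>. \<forall>r\<in>F. x (g r) \<in> D r}" by auto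
  then show ?case using insert coordinate_event_in_coord_sigma by auto
qed

definition block_event :: "nat \<Rightarrow> nat \<Rightarrow> real list set \<Rightarrow> (nat \<Rightarrow> real) set" where
  "block_event s K B = {x \<in> space \<mu>. block x s K \<in> B}"

lemma indicator_block_event:
  "x \<in> space \<mu> \<Longrightarrow> indicator B (block x s K) = (indicator (block_event s K B) x :: real)"
  by (simp add: block_event_def indicator_def)

lemma block_in_unit_cube: "x \<in> space \<mu> \<Longrightarrow> block x s K \<in> unit_cube K"
  using path_in_unit_interval by (auto simp: block_def unit_cube_def)

lemma block_event_in_coord_sigma:
  assumes B: "B \<in> Dcal K l" and I: "{s..<s+K} \<subseteq> I"
  shows "block_event s K B \<in> coord_sigma \<mu> I"
proof -
  interpret sigma_algebra "space \<mu>" "coord_sigma \<mu> I" by (rule sigma_algebra_coord_sigma)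
  obtain S where S: "B = \<Union>S" "S \<subseteq> Delta K l" using B by (auto simp: Dcal_def)
  have "finite S" using S(2) finite_cube_indices by (metis Delta_def finite_imageI finite_subset)
  moreover have "block_event s K C \<in> coord_sigma \<mu> I" if "C \<in> S" for C
  proof -
    obtain c where c: "C = dyadic_cube K l c" using \<open>C \<in> S\<close> S by (auto simp: Delta_def)
    have "block_event s K C = {x \<in> space \<mu>. \<forall>r\<in>{..<K}. x (s + r) \<in> dyadic_int l (c!r)}"
      by (auto simp: c dyadic_cube_def block_def block_event_def)
    also have "\<dots> \<in> coord_sigma \<mu> I"
      by (rule cylinder_in_coord_sigma) (use I in \<open>auto simp: dyadic_int_def\<close>)
    finally show ?thesis .
  qed
  moreover have "block_event s K B = (\<Union>C\<in>S. block_event s K C)"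
    using S by (auto simp: block_event_def)
  ultimately show ?thesis by auto
qed

lemma block_event_in_events: "B \<in> Dcal K l \<Longrightarrow> block_event s K B \<in> events"
  using block_event_in_coord_sigma[of B K l s "{s..<s+K}"] coord_sigma_subset_events by blast

definition shift :: "nat \<Rightarrow> (nat \<Rightarrow> real) \<Rightarrow> (nat \<Rightarrow> real)" where
  "shift k x = (\<lambda>i. x (i + k))"

lemma block_shift: "block (shift k x) s K = block x (s + k) K"
  by (simp add: block_def shift_def ac_simps)

lemma measurable_shift: "shift k \<in> measurable \<mu> \<mu>"
proof -
  have "(\<lambda>x i. x (i + k)) \<in> measurable path_space path_space"
    unfolding path_space_def
    by (rule measurable_PiM_single') (auto intro: measurable_component_singleton simp: space_PiM)
  then show ?thesis
    unfolding shift_def using measurable_cong_sets[OF sets_eq_path_space sets_eq_path_space] by simp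
qed

lemma distr_shift: "distr \<mu> \<mu> (shift k) = \<mu>"
proof (induction k)
  case 0
  have "shift 0 = (\<lambda>x. x)" by (simp add: shift_def fun_eq_iff)
  then show ?case by simp
next
  case (Suc k)
  have "shift (Suc k) = shift 1 \<circ> shift k" by (simp add: shift_def fun_eq_iff add.commute)
  moreover have "distr \<mu> \<mu> (shift 1) = \<mu>" using is_stationary unfolding stationary_def shift_def by simp
  ultimately show ?case using Suc by (metis measurable_shift distr_distr)
qed

lemma prob_shift:
  assumes "{x \<in> space \<mu>. P x} \<in> events"
  shows "prob {x \<in> space \<mu>. P (shift k x)} = prob {x \<in> space \<mu>. P x}"
proof -
  have "prob {x \<in> space \<mu>. P x} = measure (distr \<mu> \<mu> (shift k)) {x \<in> space \<mu>. P x}"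
    by (simp add: distr_shift)
  also have "\<dots> = prob (shift k -` {x \<in> space \<mu>. P x} \<inter> space \<mu>)"
    by (rule measure_distr[OF measurable_shift assms])
  also have "shift k -` {x \<in> space \<mu>. P x} \<inter> space \<mu> = {x \<in> space \<mu>. P (shift k x)}"
    using measurable_space[OF measurable_shift] by auto
  finally show ?thesis by simp
qed

lemma prob_block_event_shift: "B \<in> Dcal K l \<Longrightarrow> prob (block_event s K B) = prob (block_event 0 K B)"
  using prob_shift[of "\<lambda>x. block x 0 K \<in> B" s] block_event_in_events[of B K l 0]
  by (simp add: block_event_def block_shift)

lemma alpha_sets_le_1: "alpha_sets \<mu> (coord_sigma \<mu> I) (coord_sigma \<mu> J) \<le> 1"
  unfolding alpha_sets_def
proof (rule cSUP_least)
  interpret I: sigma_algebra "space \<mu>" "coord_sigma \<mu> I" by (rule sigma_algebra_coord_sigma)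
  interpret J: sigma_algebra "space \<mu>" "coord_sigma \<mu> J" by (rule sigma_algebra_coord_sigma)
  show "coord_sigma \<mu> I \<times> coord_sigma \<mu> J \<noteq> {}" using I.empty_sets J.empty_sets by blast
qed (use abs_covariance_le_1 in auto)

lemma abs_covariance_le_alpha_sets:
  assumes "U \<in> \<U>" "V \<in> \<V>"
  shows "\<bar>prob (U \<inter> V) - prob U * prob V\<bar> \<le> alpha_sets \<mu> \<U> \<V>"
proof -
  have "bdd_above ((\<lambda>UV. \<bar>prob (fst UV \<inter> snd UV) - prob (fst UV) * prob (snd UV)\<bar>) ` (\<U> \<times> \<V>))"
    using abs_covariance_le_1 by (intro bdd_aboveI[of _ 1]) auto
  from cSUP_upper[OF _ this, of "(U, V)"] show ?thesis
    using assms unfolding alpha_sets_def by simp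
qed

lemma alpha_sets_le_alpha_mix:
  "alpha_sets \<mu> (coord_sigma \<mu> {..k}) (coord_sigma \<mu> {k+m..}) \<le> alpha_mix \<mu> m"
  unfolding alpha_mix_def
  by (rule cSUP_upper) (use alpha_sets_le_1 in \<open>auto intro: bdd_aboveI[of _ 1]\<close>)

lemma abs_covariance_le_alpha_mix:
  assumes "U \<in> coord_sigma \<mu> {..k}" "V \<in> coord_sigma \<mu> {k+m..}"
  shows "\<bar>prob (U \<inter> V) - prob U * prob V\<bar> \<le> alpha_mix \<mu> m"
  using abs_covariance_le_alpha_sets[OF assms] alpha_sets_le_alpha_mix by (rule order_trans)

lemma alpha_mix_nonneg: "0 \<le> alpha_mix \<mu> m"
proof -
  interpret A: sigma_algebra "space \<mu>" "coord_sigma \<mu> {..0}" by (rule sigma_algebra_coord_sigma)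
  interpret B: sigma_algebra "space \<mu>" "coord_sigma \<mu> {0+m..}" by (rule sigma_algebra_coord_sigma)
  show ?thesis
    using abs_covariance_le_alpha_mix[OF A.empty_sets B.empty_sets] by simp
qed

lemma alpha_norm_nonneg: "alpha_summable \<mu> \<Longrightarrow> 0 \<le> alpha_norm \<mu>"
  unfolding alpha_norm_def alpha_summable_def by (rule suminf_nonneg) (use alpha_mix_nonneg in auto)

text \<open>Events of the \<open>i\<close>-th and \<open>k\<close>-th length-\<open>N\<close> blocks are at least \<open>k - i\<close> coordinates apart.\<close>

lemma abs_covariance_blocks_le_alpha_mix:
  assumes N: "1 \<le> N" and ik: "i < k"
    and U: "U \<in> coord_sigma \<mu> {i*N..<i*N+N}" and V: "V \<in> coord_sigma \<mu> {k*N..<k*N+N}"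
  shows "\<bar>prob (U \<inter> V) - prob U * prob V\<bar> \<le> alpha_mix \<mu> (k - i)"
proof -
  define d where "d = k - i"
  have d1: "1 \<le> d" and kd: "k = i + d" using ik by (auto simp: d_def)
  define p where "p = k*N - d"
  have "N - 1 \<le> d * (N - 1)" using d1 by simp
  also have "d * (N - 1) = d * N - d" by (simp add: diff_mult_distrib2)
  finally have h: "N - 1 \<le> d * N - d" .
  have dN: "d \<le> d * N" using N by simp
  have kN: "k*N = i*N + d*N" by (simp add: kd algebra_simps)
  have "i*N + N - 1 \<le> p" unfolding p_def kN using h N dN by linarith
  then have "{i*N..<i*N+N} \<subseteq> {..p}" by auto
  then have "U \<in> coord_sigma \<mu> {..p}" using U coord_sigma_mono by blast
  moreover have "p + d = k*N" unfolding p_def using dN kN by linarith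
  then have "{k*N..<k*N+N} \<subseteq> {p + (k - i)..}" by (auto simp: d_def)
  then have "V \<in> coord_sigma \<mu> {p + (k - i)..}" using V coord_sigma_mono by blast
  ultimately show ?thesis by (rule abs_covariance_le_alpha_mix)
qed

definition dyadic_cylinders :: "nat \<Rightarrow> nat set \<Rightarrow> (nat \<Rightarrow> real) set set" where
  "dyadic_cylinders s Ls = {{x \<in> space \<mu>. map (dyadic_index l) (block x s L) \<in> Q} | l L Q. L \<in> Ls}"

lemma dyadic_cylinder_eq_block_event:
  "{x \<in> space \<mu>. map (dyadic_index l) (block x s L) \<in> Q}
    = block_event s L {v \<in> unit_cube L. map (dyadic_index l) v \<in> Q}"
  using block_in_unit_cube by (auto simp: block_event_def)

lemma coarsen_block_indices:
  assumes x: "x \<in> space \<mu>" and "l \<le> l'" "L \<le> L'"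
  shows "map (\<lambda>a. a div 2^(l'-l)) (take L (map (dyadic_index l') (block x s L')))
    = map (dyadic_index l) (block x s L)"
proof -
  have "take L (block x s L') = block x s L" using \<open>L \<le> L'\<close> by (simp add: block_def take_map)
  then have "map (\<lambda>a. a div 2^(l'-l)) (take L (map (dyadic_index l') (block x s L'))) =
      map (\<lambda>y. dyadic_index l' y div 2^(l'-l)) (block x s L)"
    by (simp add: take_map)
  also have "\<dots> = map (dyadic_index l) (block x s L)"
    using path_in_unit_interval[OF x] dyadic_index_coarsen[OF _ _ \<open>l \<le> l'\<close>] by (auto simp: block_def)
  finally show ?thesis .
qed

lemma dyadic_cylinder_refine:
  assumes "l \<le> l'" "L \<le> L'"
  shows "{x \<in> space \<mu>. map (dyadic_index l) (block x s L) \<in> Q}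
    = {x \<in> space \<mu>. map (dyadic_index l') (block x s L') \<in> {c. map (\<lambda>a. a div 2^(l'-l)) (take L c) \<in> Q}}"
  using coarsen_block_indices[OF _ assms] by auto

lemma dyadic_cylinders_subset_events: "dyadic_cylinders s Ls \<subseteq> events"
  unfolding dyadic_cylinders_def dyadic_cylinder_eq_block_event
  using block_event_in_events[OF dyadic_preimage_in_Dcal] by blast

lemma dyadic_cylinders_compl: "G \<in> dyadic_cylinders s Ls \<Longrightarrow> space \<mu> - G \<in> dyadic_cylinders s Ls"
proof -
  assume "G \<in> dyadic_cylinders s Ls"
  then obtain l L Q where G: "G = {x \<in> space \<mu>. map (dyadic_index l) (block x s L) \<in> Q}" "L \<in> Ls"
    by (auto simp: dyadic_cylinders_def)
  then have "space \<mu> - G = {x \<in> space \<mu>. map (dyadic_index l) (block x s L) \<in> - Q}" by auto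
  then show ?thesis using G(2) unfolding dyadic_cylinders_def by blast
qed

lemma dyadic_cylinders_Un:
  assumes max: "\<And>a b. a \<in> Ls \<Longrightarrow> b \<in> Ls \<Longrightarrow> max a b \<in> Ls"
    and G: "G \<in> dyadic_cylinders s Ls" and H: "H \<in> dyadic_cylinders s Ls"
  shows "G \<union> H \<in> dyadic_cylinders s Ls"
proof -
  obtain l1 L1 Q1 l2 L2 Q2 where
    G: "G = {x \<in> space \<mu>. map (dyadic_index l1) (block x s L1) \<in> Q1}" "L1 \<in> Ls" and
    H: "H = {x \<in> space \<mu>. map (dyadic_index l2) (block x s L2) \<in> Q2}" "L2 \<in> Ls"
    using G H by (auto simp: dyadic_cylinders_def)
  define l where "l = max l1 l2"
  define L where "L = max L1 L2"
  have "G \<union> H = {x \<in> space \<mu>. map (dyadic_index l) (block x s L) \<in>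
      {c. map (\<lambda>a. a div 2^(l-l1)) (take L1 c) \<in> Q1} \<union> {c. map (\<lambda>a. a div 2^(l-l2)) (take L2 c) \<in> Q2}}"
  proof -
    have "l1 \<le> l" "l2 \<le> l" "L1 \<le> L" "L2 \<le> L" by (simp_all add: l_def L_def)
    then show ?thesis
      unfolding G(1) H(1)
      using coarsen_block_indices[OF _ \<open>l1 \<le> l\<close> \<open>L1 \<le> L\<close>, of _ s]
        coarsen_block_indices[OF _ \<open>l2 \<le> l\<close> \<open>L2 \<le> L\<close>, of _ s]
      by auto
  qed
  moreover have "L \<in> Ls" unfolding L_def using max G H by blast
  ultimately show ?thesis unfolding dyadic_cylinders_def by blast
qed

lemma coordinate_le_eq_INT_dyadic_cylinders:
  assumes "s \<le> i" "i < s + L"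
  shows "{x \<in> space \<mu>. x i \<le> a}
    = (\<Inter>l. {x \<in> space \<mu>. map (dyadic_index l) (block x s L) \<in> {c. real (c ! (i - s)) / 2^l \<le> a}})"
proof -
  have nth: "map (dyadic_index l) (block x s L) ! (i - s) = dyadic_index l (x i)" for x l
    using assms by (simp add: block_def)
  have "x i \<le> a \<longleftrightarrow> (\<forall>l. map (dyadic_index l) (block x s L) \<in> {c. real (c ! (i - s)) / 2^l \<le> a})"
    if "x \<in> space \<mu>" for x
    unfolding mem_Collect_eq nth
    using le_iff_dyadic_endpoints_le path_in_unit_interval[OF that] by blast
  then show ?thesis by blast
qed

lemma coordinate_event_in_sigma_dyadic_cylinders:
  assumes i: "s \<le> i" "i < s + L" and L: "L \<in> Ls" and B: "B \<in> sets borel"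
  shows "{x \<in> space \<mu>. x i \<in> B} \<in> sigma_sets (space \<mu>) (dyadic_cylinders s Ls)"
proof -
  define \<M> where "\<M> = sigma (space \<mu>) (dyadic_cylinders s Ls)"
  have subset: "dyadic_cylinders s Ls \<subseteq> Pow (space \<mu>)" by (auto simp: dyadic_cylinders_def)
  have sets_\<M>: "sets \<M> = sigma_sets (space \<mu>) (dyadic_cylinders s Ls)"
    unfolding \<M>_def using subset by (rule sets_measure_of)
  have space_\<M>: "space \<M> = space \<mu>" unfolding \<M>_def using subset by (rule space_measure_of)
  have "(\<lambda>x. x i) \<in> borel_measurable \<M>"
  proof (subst borel_measurable_iff_le, intro allI)
    fix a
    have "{x \<in> space \<mu>. map (dyadic_index l) (block x s L) \<in> {c. real (c ! (i - s)) / 2^l \<le> a}}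
        \<in> sets \<M>" for l
      unfolding sets_\<M> dyadic_cylinders_def using L by (intro sigma_sets.Basic) blast
    then have "{x \<in> space \<mu>. x i \<le> a} \<in> sets \<M>"
      unfolding coordinate_le_eq_INT_dyadic_cylinders[OF i] by (intro sets.countable_INT) auto
    then show "{w \<in> space \<M>. w i \<le> a} \<in> sets \<M>" unfolding space_\<M> .
  qed
  from measurable_sets[OF this B] show ?thesis
    unfolding sets_\<M> space_\<M> by (simp add: vimage_def Int_def conj_commute)
qed

lemma dyadic_cylinder_approximation:
  assumes max: "\<And>a b. a \<in> Ls \<Longrightarrow> b \<in> Ls \<Longrightarrow> max a b \<in> Ls" and L0: "L0 \<in> Ls"
    and I: "\<And>i. i \<in> I \<Longrightarrow> s \<le> i \<and> (\<exists>L\<in>Ls. i < s + L)"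
    and U: "U \<in> coord_sigma \<mu> I" and \<epsilon>: "0 < \<epsilon>"
  shows "\<exists>G\<in>dyadic_cylinders s Ls. prob (sym_diff U G) < \<epsilon>"
proof (rule sigma_sets_approximation[OF dyadic_cylinders_subset_events _ dyadic_cylinders_compl
      dyadic_cylinders_Un[OF max] _ \<epsilon>])
  show "{} \<in> dyadic_cylinders s Ls"
    using L0 unfolding dyadic_cylinders_def by (intro CollectI exI[of _ 0] exI[of _ L0] exI[of _ "{}"]) auto
  have "coord_sigma \<mu> I \<subseteq> sigma_sets (space \<mu>) (dyadic_cylinders s Ls)"
    unfolding coord_sigma_def
  proof (rule sigma_sets_mono, safe)
    fix i :: nat and B :: "real set" assume "i \<in> I" "B \<in> sets borel"
    then obtain L where "s \<le> i" "i < s + L" "L \<in> Ls" using I by blast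
    with \<open>B \<in> sets borel\<close> have "{x \<in> space \<mu>. x i \<in> B} \<in> sigma_sets (space \<mu>) (dyadic_cylinders s Ls)"
      by (intro coordinate_event_in_sigma_dyadic_cylinders)
    moreover have "(\<lambda>x. x i) -` B \<inter> space \<mu> = {x \<in> space \<mu>. x i \<in> B}" by auto
    ultimately show "(\<lambda>x. x i) -` B \<inter> space \<mu> \<in> sigma_sets (space \<mu>) (dyadic_cylinders s Ls)" by simp
  qed
  then show "U \<in> sigma_sets (space \<mu>) (dyadic_cylinders s Ls)" using U by blast
qed

definition block_covariance :: "nat \<Rightarrow> nat \<Rightarrow> nat \<Rightarrow> real list set \<Rightarrow> real list set \<Rightarrow> real" where
  "block_covariance n m j A B = \<bar>prob (block_event 0 j A \<inter> block_event (j+m-1) (n-m-j+1) B)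
      - prob (block_event 0 j A) * prob (block_event 0 (n-m-j+1) B)\<bar>"

definition dyadic_alpha :: "nat \<Rightarrow> nat \<Rightarrow> nat \<Rightarrow> real" where
  "dyadic_alpha n l m = Max ((\<lambda>(j, A, B). block_covariance n m j A B) ` test_triples n l m)"

lemma block_covariance_le_alpha_mix:
  assumes m: "1 \<le> m" and jAB: "(j, A, B) \<in> test_triples n l m"
  shows "block_covariance n m j A B \<le> alpha_mix \<mu> m"
proof -
  have j: "1 \<le> j" "j \<le> n - m" and A: "A \<in> Dcal j l" and B: "B \<in> Dcal (n - m - j + 1) l"
    using jAB by (auto simp: test_triples_def)
  have U: "block_event 0 j A \<in> coord_sigma \<mu> {..j-1}"
    by (rule block_event_in_coord_sigma[OF A]) (use j in auto)
  have V: "block_event (j+m-1) (n-m-j+1) B \<in> coord_sigma \<mu> {(j-1)+m..}"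
    by (rule block_event_in_coord_sigma[OF B]) (use j m in auto)
  show ?thesis
    unfolding block_covariance_def prob_block_event_shift[OF B, of "j+m-1", symmetric]
    using abs_covariance_le_alpha_mix[OF U V] .
qed

lemma dyadic_alpha_le_alpha_mix:
  assumes "1 \<le> m" "m < n"
  shows "dyadic_alpha n l m \<le> alpha_mix \<mu> m"
proof -
  have "test_triples n l m \<noteq> {}" using empty_test_triple[OF assms(2)] by blast
  then show ?thesis
    unfolding dyadic_alpha_def using finite_test_triples block_covariance_le_alpha_mix[OF assms(1)]
    by (subst Max_le_iff) auto
qed

lemma block_covariance_le_dyadic_alpha:
  "(j, A, B) \<in> test_triples n l m \<Longrightarrow> block_covariance n m j A B \<le> dyadic_alpha n l m"
  unfolding dyadic_alpha_def using finite_test_triples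
  by (intro Max_ge) (auto intro: image_eqI[of _ _ "(j, A, B)"])

lemma dyadic_alpha_nonneg: "m < n \<Longrightarrow> 0 \<le> dyadic_alpha n l m"
  using block_covariance_le_dyadic_alpha[OF empty_test_triple, of m n l]
  unfolding block_covariance_def by (meson abs_ge_zero order_trans)

text \<open>Approximating a nearly extremal pair of past and future events by dyadic cylinders.\<close>

lemma dyadic_cylinders_covariance_gt:
  assumes "0 < \<epsilon>"
  shows "\<exists>k G H. G \<in> dyadic_cylinders 0 {k+1} \<and> H \<in> dyadic_cylinders (k+m) UNIV \<and>
    alpha_mix \<mu> m - \<epsilon> < \<bar>prob (G \<inter> H) - prob G * prob H\<bar>"
proof -
  have "alpha_mix \<mu> m - \<epsilon>/2 < (SUP k. alpha_sets \<mu> (coord_sigma \<mu> {..k}) (coord_sigma \<mu> {k+m..}))"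
    using assms by (simp add: alpha_mix_def)
  moreover have "bdd_above (range (\<lambda>k. alpha_sets \<mu> (coord_sigma \<mu> {..k}) (coord_sigma \<mu> {k+m..})))"
    using alpha_sets_le_1 by (intro bdd_aboveI[of _ 1]) auto
  ultimately obtain k where
    "alpha_mix \<mu> m - \<epsilon>/2 < alpha_sets \<mu> (coord_sigma \<mu> {..k}) (coord_sigma \<mu> {k+m..})"
    by (subst (asm) less_cSUP_iff) auto
  then have sup: "alpha_mix \<mu> m - \<epsilon>/2 < (SUP UV \<in> coord_sigma \<mu> {..k} \<times> coord_sigma \<mu> {k+m..}.
      \<bar>prob (fst UV \<inter> snd UV) - prob (fst UV) * prob (snd UV)\<bar>)"
    unfolding alpha_sets_def .
  interpret U: sigma_algebra "space \<mu>" "coord_sigma \<mu> {..k}" by (rule sigma_algebra_coord_sigma)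
  interpret V: sigma_algebra "space \<mu>" "coord_sigma \<mu> {k+m..}" by (rule sigma_algebra_coord_sigma)
  have "coord_sigma \<mu> {..k} \<times> coord_sigma \<mu> {k+m..} \<noteq> {}" using U.empty_sets V.empty_sets by blast
  moreover note sup
  moreover have "bdd_above ((\<lambda>UV. \<bar>prob (fst UV \<inter> snd UV) - prob (fst UV) * prob (snd UV)\<bar>)
      ` (coord_sigma \<mu> {..k} \<times> coord_sigma \<mu> {k+m..}))"
    using abs_covariance_le_1 by (intro bdd_aboveI[of _ 1]) auto
  ultimately obtain U V where UV: "U \<in> coord_sigma \<mu> {..k}" "V \<in> coord_sigma \<mu> {k+m..}"
    and cov_UV: "alpha_mix \<mu> m - \<epsilon>/2 < \<bar>prob (U \<inter> V) - prob U * prob V\<bar>"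
    by (subst (asm) less_cSUP_iff) auto
  have \<epsilon>8: "0 < \<epsilon>/8" using assms by simp
  obtain G where G: "G \<in> dyadic_cylinders 0 {k+1}" "prob (sym_diff U G) < \<epsilon>/8"
    using dyadic_cylinder_approximation[of "{k+1}" "k+1" "{..k}" 0 U "\<epsilon>/8"] UV \<epsilon>8 by auto
  have "\<exists>H\<in>dyadic_cylinders (k+m) UNIV. prob (sym_diff V H) < \<epsilon>/8"
  proof (rule dyadic_cylinder_approximation[of UNIV 0 "{k+m..}" "k+m" V "\<epsilon>/8"])
    fix i assume "i \<in> {k+m..}"
    then show "k + m \<le> i \<and> (\<exists>L\<in>UNIV. i < k + m + L)" by (intro conjI bexI[of _ "Suc i"]) auto
  qed (use UV \<epsilon>8 in auto)
  then obtain H where H: "H \<in> dyadic_cylinders (k+m) UNIV" "prob (sym_diff V H) < \<epsilon>/8" by blast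
  have "U \<in> events" "V \<in> events" using UV coord_sigma_subset_events by blast+
  moreover have "G \<in> events" "H \<in> events" using G(1) H(1) dyadic_cylinders_subset_events by blast+
  ultimately have "\<bar>(prob (U \<inter> V) - prob U * prob V) - (prob (G \<inter> H) - prob G * prob H)\<bar> < \<epsilon>/2"
    using abs_covariance_diff_le[of U G V H] G(2) H(2) by linarith
  then have "alpha_mix \<mu> m - \<epsilon> < \<bar>prob (G \<inter> H) - prob G * prob H\<bar>" using cov_UV by linarith
  with G(1) H(1) show ?thesis by blast
qed

lemma eventually_dyadic_alpha_gt:
  assumes m: "1 \<le> m" and \<epsilon>: "0 < \<epsilon>"
    and l: "filterlim l at_top sequentially" and n: "filterlim n at_top sequentially"
  shows "eventually (\<lambda>t. alpha_mix \<mu> m - \<epsilon> < dyadic_alpha (n t) (l t) m) sequentially"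
proof -
  obtain k G H where G: "G \<in> dyadic_cylinders 0 {k+1}" and H: "H \<in> dyadic_cylinders (k+m) UNIV"
    and cov: "alpha_mix \<mu> m - \<epsilon> < \<bar>prob (G \<inter> H) - prob G * prob H\<bar>"
    using dyadic_cylinders_covariance_gt[OF \<epsilon>] by blast
  obtain l0 Q0 where G_eq: "G = {x \<in> space \<mu>. map (dyadic_index l0) (block x 0 (k+1)) \<in> Q0}"
    using G unfolding dyadic_cylinders_def by blast
  obtain l1 L1 Q1 where H_eq: "H = {x \<in> space \<mu>. map (dyadic_index l1) (block x (k+m) L1) \<in> Q1}"
    using H unfolding dyadic_cylinders_def by blast
  have "eventually (\<lambda>t. max l0 l1 \<le> l t) sequentially" using l unfolding filterlim_at_top by blast
  moreover have "eventually (\<lambda>t. k + m + L1 + 1 \<le> n t) sequentially"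
    using n unfolding filterlim_at_top by blast
  ultimately show ?thesis
  proof eventually_elim
    case (elim t)
    define L where "L = n t - m - (k+1) + 1"
    define A where "A = {v \<in> unit_cube (k+1).
        map (dyadic_index (l t)) v \<in> {c. map (\<lambda>a. a div 2^(l t - l0)) (take (k+1) c) \<in> Q0}}"
    define B where "B = {v \<in> unit_cube L.
        map (dyadic_index (l t)) v \<in> {c. map (\<lambda>a. a div 2^(l t - l1)) (take L1 c) \<in> Q1}}"
    have A_Dcal: "A \<in> Dcal (k+1) (l t)" unfolding A_def by (rule dyadic_preimage_in_Dcal)
    have B_Dcal: "B \<in> Dcal L (l t)" unfolding B_def by (rule dyadic_preimage_in_Dcal)
    have "(k+1, A, B) \<in> test_triples (n t) (l t) m"
      using elim A_Dcal B_Dcal by (auto simp: test_triples_def L_def)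
    then have "block_covariance (n t) m (k+1) A B \<le> dyadic_alpha (n t) (l t) m"
      by (rule block_covariance_le_dyadic_alpha)
    moreover have "block_event 0 (k+1) A = G"
      unfolding A_def G_eq dyadic_cylinder_eq_block_event[symmetric]
      by (rule dyadic_cylinder_refine[symmetric]) (use elim in auto)
    moreover have "block_event (k+m) L B = H"
      unfolding B_def H_eq dyadic_cylinder_eq_block_event[symmetric]
      by (rule dyadic_cylinder_refine[symmetric]) (use elim in \<open>auto simp: L_def\<close>)
    moreover have "prob (block_event 0 L B) = prob (block_event (k+m) L B)"
      using prob_block_event_shift[OF B_Dcal, of "k+m"] by simp
    ultimately show ?case
      using cov m by (simp add: block_covariance_def L_def)
  qed
qed

text \<open>Each term tends to \<open>\<alpha>(m)\<close> from below; summability of \<open>\<alpha>\<close> controls the tail.\<close>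

lemma sum_dyadic_alpha_tendsto:
  assumes summable: "alpha_summable \<mu>" and M: "strict_mono M" and M_less: "\<And>t. M t < n t"
    and l: "filterlim l at_top sequentially" and n: "filterlim n at_top sequentially"
  shows "(\<lambda>t. \<Sum>m=1..M t. dyadic_alpha (n t) (l t) m) \<longlonglongrightarrow> alpha_norm \<mu>"
proof -
  define a where "a = (\<lambda>d. alpha_mix \<mu> (Suc d))"
  have norm_eq: "alpha_norm \<mu> = suminf a" unfolding alpha_norm_def a_def ..
  have "summable a" using summable by (simp add: a_def alpha_summable_def)
  show ?thesis unfolding norm_eq tendsto_iff dist_real_def
  proof (intro allI impI)
    fix r :: real assume r: "0 < r"
    have upper: "(\<Sum>m=1..M t. dyadic_alpha (n t) (l t) m) \<le> suminf a" for t
    proof -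
      have "(\<Sum>m=1..M t. dyadic_alpha (n t) (l t) m) \<le> (\<Sum>m=1..M t. alpha_mix \<mu> m)"
        by (rule sum_mono) (use dyadic_alpha_le_alpha_mix M_less[of t] in auto)
      also have "\<dots> = (\<Sum>d<M t. a d)" unfolding a_def by (rule sum_bounds_lt_plus1[symmetric])
      also have "\<dots> \<le> suminf a"
        by (rule sum_le_suminf) (use \<open>summable a\<close> alpha_mix_nonneg in \<open>auto simp: a_def\<close>)
      finally show ?thesis .
    qed
    obtain K where K: "\<bar>(\<Sum>d<K. a d) - suminf a\<bar> < r/2"
      using summable_LIMSEQ[OF \<open>summable a\<close>, THEN tendstoD, of "r/2"] r
      by (auto simp: eventually_sequentially dist_real_def)
    define \<eta> where "\<eta> = r / (2 * (real K + 1))"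
    have \<eta>: "0 < \<eta>" using r by (simp add: \<eta>_def)
    have "real K * \<eta> = (r/2) * (real K / (real K + 1))" by (simp add: \<eta>_def field_simps)
    also have "\<dots> < r/2" using r by (simp add: field_simps)
    finally have K\<eta>: "real K * \<eta> < r/2" .
    have "eventually (\<lambda>t. \<forall>m\<in>{1..K}. alpha_mix \<mu> m - \<eta> < dyadic_alpha (n t) (l t) m) sequentially"
      by (rule eventually_ball_finite) (use eventually_dyadic_alpha_gt[OF _ \<eta> l n] in auto)
    moreover have "eventually (\<lambda>t. K \<le> M t) sequentially"
      unfolding eventually_sequentially using seq_suble[OF M] le_trans by blast
    ultimately show "eventually (\<lambda>t. \<bar>(\<Sum>m=1..M t. dyadic_alpha (n t) (l t) m) - suminf a\<bar> < r) sequentially"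
    proof eventually_elim
      case (elim t)
      have "(\<Sum>d<K. a d) - real K * \<eta> = (\<Sum>m=1..K. alpha_mix \<mu> m - \<eta>)"
        by (simp add: sum_subtractf a_def sum_bounds_lt_plus1)
      also have "\<dots> \<le> (\<Sum>m=1..K. dyadic_alpha (n t) (l t) m)"
        by (rule sum_mono) (use elim in \<open>auto intro: less_imp_le\<close>)
      also have "\<dots> \<le> (\<Sum>m=1..M t. dyadic_alpha (n t) (l t) m)"
        by (rule sum_mono2) (use elim dyadic_alpha_nonneg M_less[of t] in auto)
      finally show ?case using upper[of t] K K\<eta> by linarith
    qed
  qed
qed

definition deviation_event :: "nat \<Rightarrow> (nat \<Rightarrow> (nat \<Rightarrow> real) set) \<Rightarrow> real \<Rightarrow> real \<Rightarrow> (nat \<Rightarrow> real) set" where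
  "deviation_event t E p \<eta> = {x \<in> space \<mu>. \<eta> \<le> \<bar>indicator_average t E x - p\<bar>}"

definition mu_events :: "nat \<Rightarrow> real list set \<Rightarrow> nat \<Rightarrow> (nat \<Rightarrow> real) set" where
  "mu_events K B i = block_event (i*K) K B"

definition gamma_events :: "nat \<Rightarrow> nat \<Rightarrow> nat \<Rightarrow> real list set \<Rightarrow> real list set \<Rightarrow> nat \<Rightarrow> (nat \<Rightarrow> real) set" where
  "gamma_events n m j A B i = block_event (i*n) j A \<inter> block_event (i*n + j + m - 1) (n-m-j+1) B"

lemma emp_mu_eq_indicator_average: "x \<in> space \<mu> \<Longrightarrow> emp_mu t x K B = indicator_average t (mu_events K B) x"
  by (simp add: emp_mu_def indicator_average_def mu_events_def indicator_block_event)

lemma emp_gamma_eq_indicator_average: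
  "x \<in> space \<mu> \<Longrightarrow> emp_gamma t n m j x A B = indicator_average t (gamma_events n m j A B) x"
  by (simp add: emp_gamma_def indicator_average_def gamma_events_def indicator_block_event
      indicator_inter_arith)

lemma deviation_event_in_events:
  assumes "\<And>i. E i \<in> events"
  shows "deviation_event t E p \<eta> \<in> events"
proof -
  have "indicator_average t E \<in> borel_measurable \<mu>"
    unfolding indicator_average_def using assms
    by (intro borel_measurable_times borel_measurable_const borel_measurable_sum borel_measurable_indicator) auto
  then show ?thesis unfolding deviation_event_def by measurable
qed

lemma mu_events_in_coord_sigma: "B \<in> Dcal K l \<Longrightarrow> mu_events K B i \<in> coord_sigma \<mu> {i*K..<i*K+K}"
  unfolding mu_events_def by (rule block_event_in_coord_sigma) auto

lemma prob_mu_events: "B \<in> Dcal K l \<Longrightarrow> prob (mu_events K B i) = prob (block_event 0 K B)"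
  unfolding mu_events_def by (rule prob_block_event_shift)

lemma gamma_events_in_coord_sigma:
  assumes "(j, A, B) \<in> test_triples n l m" "1 \<le> m"
  shows "gamma_events n m j A B i \<in> coord_sigma \<mu> {i*n..<i*n+n}"
proof -
  have j: "1 \<le> j" "j \<le> n - m" and A: "A \<in> Dcal j l" and B: "B \<in> Dcal (n - m - j + 1) l"
    using assms by (auto simp: test_triples_def)
  interpret sigma_algebra "space \<mu>" "coord_sigma \<mu> {i*n..<i*n+n}" by (rule sigma_algebra_coord_sigma)
  have "block_event (i*n) j A \<in> coord_sigma \<mu> {i*n..<i*n+n}"
    by (rule block_event_in_coord_sigma[OF A]) (use j in auto)
  moreover have "block_event (i*n + j + m - 1) (n-m-j+1) B \<in> coord_sigma \<mu> {i*n..<i*n+n}"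
    by (rule block_event_in_coord_sigma[OF B]) (use j assms(2) in auto)
  ultimately show ?thesis unfolding gamma_events_def by (rule Int)
qed

lemma prob_gamma_events:
  assumes "(j, A, B) \<in> test_triples n l m" "1 \<le> m"
  shows "prob (gamma_events n m j A B i) = prob (gamma_events n m j A B 0)"
proof -
  have A: "A \<in> Dcal j l" and B: "B \<in> Dcal (n - m - j + 1) l"
    using assms by (auto simp: test_triples_def)
  have "{x \<in> space \<mu>. block x 0 j \<in> A \<and> block x (j+m-1) (n-m-j+1) \<in> B}
      = block_event 0 j A \<inter> block_event (j+m-1) (n-m-j+1) B"
    by (auto simp: block_event_def)
  then have "{x \<in> space \<mu>. block x 0 j \<in> A \<and> block x (j+m-1) (n-m-j+1) \<in> B} \<in> events"
    using block_event_in_events[OF A] block_event_in_events[OF B] by auto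
  moreover have "gamma_events n m j A B i
      = {x \<in> space \<mu>. block x (i*n) j \<in> A \<and> block x (i*n + j + m - 1) (n-m-j+1) \<in> B}" for i
    by (auto simp: gamma_events_def block_event_def)
  ultimately show ?thesis
    using prob_shift[of "\<lambda>x. block x 0 j \<in> A \<and> block x (j+m-1) (n-m-j+1) \<in> B" "i*n"] assms(2)
    by (simp add: block_shift algebra_simps)
qed

lemma prob_deviation_event_le:
  assumes summable: "alpha_summable \<mu>"
    and K: "1 \<le> K" and t: "0 < t" and \<eta>: "0 < \<eta>"
    and E: "\<And>i. E i \<in> coord_sigma \<mu> {i*K..<i*K+K}" and pE: "\<And>i. prob (E i) = p"
  shows "prob (deviation_event t E p \<eta>) \<le> (1 + 2 * alpha_norm \<mu>) / (real t * \<eta>\<^sup>2)"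
  unfolding deviation_event_def alpha_norm_def
proof (rule prob_indicator_average_deviation_le[OF t _ pE _ alpha_mix_nonneg _ \<eta>])
  show "E i \<in> events" for i using E coord_sigma_subset_events by blast
  show "\<bar>prob (E i \<inter> E k) - p * p\<bar> \<le> alpha_mix \<mu> (k - i)" if "i < k" for i k
    using abs_covariance_blocks_le_alpha_mix[OF K that E E] pE by simp
qed (use summable in \<open>simp add: alpha_summable_def\<close>)

end

section \<open>From concentration to the estimator\<close>

lemma abs_Max_diff_le:
  fixes f g :: "'a \<Rightarrow> real"
  assumes X: "finite X" "X \<noteq> {}" and diff: "\<And>x. x \<in> X \<Longrightarrow> \<bar>f x - g x\<bar> \<le> c"
  shows "\<bar>Max (f ` X) - Max (g ` X)\<bar> \<le> c"
proof -
  have "Max (f ` X) \<in> f ` X" "Max (g ` X) \<in> g ` X" using X by simp_all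
  then obtain x y where x: "x \<in> X" "Max (f ` X) = f x" and y: "y \<in> X" "Max (g ` X) = g y"
    by auto
  have "g x \<le> Max (g ` X)" "f y \<le> Max (f ` X)"
    using Max_ge[OF finite_imageI[OF X(1)] imageI[OF x(1)]] Max_ge[OF finite_imageI[OF X(1)] imageI[OF y(1)]]
    by blast+
  then show ?thesis using x y diff[OF x(1)] diff[OF y(1)] by linarith
qed

lemma two_power_add_two_power_le:
  assumes "1 \<le> a" "1 \<le> b"
  shows "(2::nat)^a + 2^b \<le> 2^(a+b-1) + 2"
proof -
  define p :: nat where "p = 2^(a-1)"
  define q :: nat where "q = 2^(b-1)"
  have "1 \<le> p" "1 \<le> q" by (simp_all add: p_def q_def)
  then have "p - 1 \<le> (p - 1) * q" by simp
  moreover have "p * q = (p - 1) * q + q" using \<open>1 \<le> p\<close> by (simp add: diff_mult_distrib)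
  ultimately have "p + q \<le> p * q + 1" by linarith
  moreover obtain a' b' where "a = Suc a'" "b = Suc b'" using assms by (metis Suc_le_D One_nat_def)
  then have "(2::nat)^a = 2 * p" "(2::nat)^b = 2 * q" "(2::nat)^(a+b-1) = 2 * p * q"
    by (simp_all add: p_def q_def power_add)
  ultimately show ?thesis by linarith
qed

lemma three_mult_le_two_power: "3 * n \<le> 2^(n-1) + (8::nat)"
proof (induction n)
  case 0
  then show ?case by simp
next
  case (Suc n)
  show ?case
  proof (cases "n < 3")
    case True
    then have "n = 0 \<or> n = 1 \<or> n = 2" by auto
    then show ?thesis by auto
  next
    case False
    then have "(2::nat)^2 \<le> 2^(n-1)" by (intro power_increasing) auto
    then have "(3::nat) \<le> 2^(n-1)" by simp
    moreover have "(2::nat)^(Suc n - 1) = 2 * 2^(n-1)" using False by (cases n) auto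
    ultimately show ?thesis using Suc.IH by simp
  qed
qed

lemma cube_le_two_power_power:
  assumes "1 \<le> L"
  shows "real N ^ 3 \<le> 256 * 2^(2^(N*L - 1))"
proof -
  have "N^3 \<le> (2^N)^3" using less_exp[of N] by (intro power_mono) auto
  also have "((2::nat)^N)^3 = 2^(3*N)" by (simp add: power_mult[symmetric] mult.commute)
  also have "\<dots> \<le> 2^(2^(N-1) + 8)" by (rule power_increasing) (use three_mult_le_two_power in auto)
  also have "\<dots> \<le> 2^(2^(N*L-1) + 8)"
  proof -
    have "N - 1 \<le> N*L - 1" using assms by (simp add: diff_le_mono)
    then have "(2::nat)^(N-1) \<le> 2^(N*L-1)" by (rule power_increasing) simp
    then show ?thesis by (intro power_increasing) auto
  qed
  also have "\<dots> = 256 * 2^(2^(N*L-1))" by (simp add: power_add)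
  finally have "N^3 \<le> 256 * 2^(2^(N*L-1))" .
  then have "real (N^3) \<le> real (256 * 2^(2^(N*L-1)))" by (simp only: of_nat_le_iff)
  then show ?thesis by simp
qed

lemma card_test_triples_le:
  assumes l: "1 \<le> l" and m: "1 \<le> m"
  shows "card (test_triples n l m) \<le> n * 2^(2^(n*l - 1) + 2)"
proof -
  have fin: "finite (Sigma {1..n-m} (\<lambda>j. Dcal j l \<times> Dcal (n - m - j + 1) l))"
    by (intro finite_SigmaI finite_cartesian_product finite_Dcal) simp
  have "card (test_triples n l m) \<le> card (Sigma {1..n-m} (\<lambda>j. Dcal j l \<times> Dcal (n - m - j + 1) l))"
    by (rule card_mono[OF fin]) (auto simp: test_triples_def)
  also have "\<dots> = (\<Sum>j\<in>{1..n-m}. card (Dcal j l) * card (Dcal (n - m - j + 1) l))"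
    by (simp add: card_cartesian_product finite_Dcal)
  also have "\<dots> \<le> (\<Sum>j\<in>{1..n-m}. (2::nat)^(2^(n*l - 1) + 2))"
  proof (rule sum_mono)
    fix j assume j: "j \<in> {1..n-m}"
    define L where "L = n - m - j + 1"
    have "card (Dcal j l) * card (Dcal L l) \<le> 2^(2^(j*l)) * 2^(2^(L*l))"
      by (intro mult_le_mono card_Dcal_le)
    also have "\<dots> = 2^(2^(j*l) + 2^(L*l))" by (simp add: power_add)
    also have "\<dots> \<le> 2^(2^(j*l + L*l - 1) + 2)"
      by (intro power_increasing two_power_add_two_power_le) (use j l in \<open>auto simp: L_def\<close>)
    also have "\<dots> \<le> 2^(2^(n*l - 1) + 2)"
    proof -
      have "j + L \<le> n" using j m by (auto simp: L_def)
      then have "j*l + L*l \<le> n*l" using add_mult_distrib mult_le_mono1 by metis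
      then show ?thesis by (intro power_increasing add_right_mono) auto
    qed
    finally show "card (Dcal j l) * card (Dcal (n - m - j + 1) l) \<le> 2^(2^(n*l - 1) + 2)"
      by (simp add: L_def)
  qed
  also have "\<dots> \<le> n * 2^(2^(n*l - 1) + 2)" by simp
  finally show ?thesis .
qed

context path_process
begin

definition triple_deviation_event ::
    "nat \<Rightarrow> nat \<Rightarrow> nat \<Rightarrow> real \<Rightarrow> nat \<times> real list set \<times> real list set \<Rightarrow> (nat \<Rightarrow> real) set" where
  "triple_deviation_event t n m \<eta> = (\<lambda>(j, A, B).
      deviation_event t (gamma_events n m j A B) (prob (gamma_events n m j A B 0)) \<eta>
    \<union> deviation_event t (mu_events j A) (prob (block_event 0 j A)) \<eta>
    \<union> deviation_event t (mu_events (n-m-j+1) B) (prob (block_event 0 (n-m-j+1) B)) \<eta>)"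

lemma triple_deviation_event_in_events:
  assumes "1 \<le> m" "(j, A, B) \<in> test_triples n l m"
  shows "triple_deviation_event t n m \<eta> (j, A, B) \<in> events"
proof -
  have "A \<in> Dcal j l" "B \<in> Dcal (n - m - j + 1) l" using assms(2) by (auto simp: test_triples_def)
  then show ?thesis unfolding triple_deviation_event_def prod.case
    using gamma_events_in_coord_sigma[OF assms(2,1)] mu_events_in_coord_sigma coord_sigma_subset_events
    by (intro sets.Un deviation_event_in_events) blast+
qed

lemma prob_triple_deviation_event_le:
  assumes summable: "alpha_summable \<mu>" and t: "0 < t" and \<eta>: "0 < \<eta>"
    and m: "1 \<le> m" and jAB: "(j, A, B) \<in> test_triples n l m"
  shows "prob (triple_deviation_event t n m \<eta> (j, A, B)) \<le> 3 * ((1 + 2 * alpha_norm \<mu>) / (real t * \<eta>\<^sup>2))"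
proof -
  define V where "V = (1 + 2 * alpha_norm \<mu>) / (real t * \<eta>\<^sup>2)"
  let ?D\<gamma> = "deviation_event t (gamma_events n m j A B) (prob (gamma_events n m j A B 0)) \<eta>"
  let ?DA = "deviation_event t (mu_events j A) (prob (block_event 0 j A)) \<eta>"
  let ?DB = "deviation_event t (mu_events (n-m-j+1) B) (prob (block_event 0 (n-m-j+1) B)) \<eta>"
  have j: "1 \<le> j" and A: "A \<in> Dcal j l" and B: "B \<in> Dcal (n - m - j + 1) l"
    using jAB by (auto simp: test_triples_def)
  have "1 \<le> n" using j jAB by (auto simp: test_triples_def)
  have events: "?D\<gamma> \<in> events" "?DA \<in> events" "?DB \<in> events"
    using gamma_events_in_coord_sigma[OF jAB m] mu_events_in_coord_sigma[OF A] mu_events_in_coord_sigma[OF B]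
      coord_sigma_subset_events by (blast intro: deviation_event_in_events)+
  have "prob (triple_deviation_event t n m \<eta> (j, A, B)) \<le> prob (?D\<gamma> \<union> ?DA) + prob ?DB"
    unfolding triple_deviation_event_def prod.case using events by (intro measure_Un_le) auto
  also have "\<dots> \<le> prob ?D\<gamma> + prob ?DA + prob ?DB"
    using events by (intro add_right_mono measure_Un_le)
  also have "\<dots> \<le> V + V + V"
    using prob_deviation_event_le[OF summable \<open>1 \<le> n\<close> t \<eta> gamma_events_in_coord_sigma[OF jAB m]
        prob_gamma_events[OF jAB m]]
      prob_deviation_event_le[OF summable j t \<eta> mu_events_in_coord_sigma[OF A] prob_mu_events[OF A]]
      prob_deviation_event_le[OF summable _ t \<eta> mu_events_in_coord_sigma[OF B] prob_mu_events[OF B]]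
    unfolding V_def by (intro add_mono) auto
  also have "\<dots> = 3 * V" by simp
  finally show ?thesis unfolding V_def .
qed

lemma abs_empirical_covariance_diff_le:
  assumes t: "0 < t" and x: "x \<in> space \<mu> - triple_deviation_event t n m \<eta> (j, A, B)"
  shows "\<bar>\<bar>emp_gamma t n m j x A B - emp_mu t x j A * emp_mu t x (n - m - j + 1) B\<bar>
    - block_covariance n m j A B\<bar> \<le> 3 * \<eta>"
proof -
  define g where "g = emp_gamma t n m j x A B"
  define a where "a = emp_mu t x j A"
  define b where "b = emp_mu t x (n - m - j + 1) B"
  define pg where "pg = prob (gamma_events n m j A B 0)"
  define pa where "pa = prob (block_event 0 j A)"
  define pb where "pb = prob (block_event 0 (n - m - j + 1) B)"
  have xs: "x \<in> space \<mu>" using x by simp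
  have "x \<notin> deviation_event t (gamma_events n m j A B) pg \<eta>"
    and "x \<notin> deviation_event t (mu_events j A) pa \<eta>"
    and "x \<notin> deviation_event t (mu_events (n - m - j + 1) B) pb \<eta>"
    using x by (simp_all add: triple_deviation_event_def pg_def pa_def pb_def)
  then have "\<bar>g - pg\<bar> \<le> \<eta>" "\<bar>a - pa\<bar> \<le> \<eta>" "\<bar>b - pb\<bar> \<le> \<eta>"
    using xs by (simp_all add: deviation_event_def g_def a_def b_def emp_gamma_eq_indicator_average
        emp_mu_eq_indicator_average)
  moreover have "\<bar>a * b - pa * pb\<bar> \<le> \<bar>a - pa\<bar> + \<bar>b - pb\<bar>"
    unfolding b_def emp_mu_eq_indicator_average[OF xs] pa_def
    by (intro abs_mult_diff_le indicator_average_bounds[OF t]) auto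
  moreover have "block_covariance n m j A B = \<bar>pg - pa * pb\<bar>"
    unfolding block_covariance_def pg_def pa_def pb_def gamma_events_def by simp
  moreover have "\<bar>\<bar>g - a * b\<bar> - \<bar>pg - pa * pb\<bar>\<bar> \<le> \<bar>(g - pg) - (a * b - pa * pb)\<bar>"
    using abs_triangle_ineq3[of "g - a * b" "pg - pa * pb"] by (simp add: algebra_simps)
  moreover have "\<bar>(g - pg) - (a * b - pa * pb)\<bar> \<le> \<bar>g - pg\<bar> + \<bar>a * b - pa * pb\<bar>"
    by (rule abs_triangle_ineq4)
  ultimately show ?thesis unfolding g_def[symmetric] a_def[symmetric] b_def[symmetric] by linarith
qed

definition bad_event :: "nat \<Rightarrow> nat \<Rightarrow> nat \<Rightarrow> nat \<Rightarrow> real \<Rightarrow> (nat \<Rightarrow> real) set" where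
  "bad_event t n l M \<eta> =
    (\<Union>m\<in>{1..M}. \<Union>p\<in>test_triples n l m. triple_deviation_event t n m \<eta> p)"

lemma bad_event_in_events: "bad_event t n l M \<eta> \<in> events"
  unfolding bad_event_def using triple_deviation_event_in_events finite_test_triples
  by (intro sets.finite_UN) auto

lemma abs_alpha_hat_diff_le:
  assumes t: "0 < t" and m: "m \<in> {1..M}" and M: "M < n" and x: "x \<in> space \<mu> - bad_event t n l M \<eta>"
  shows "\<bar>alpha_hat t n l x m - dyadic_alpha n l m\<bar> \<le> 3 * \<eta>"
  unfolding alpha_hat_def dyadic_alpha_def test_triples_def[symmetric]
proof (rule abs_Max_diff_le[OF finite_test_triples])
  show "test_triples n l m \<noteq> {}" using empty_test_triple[of m n l] m M by auto
  fix p assume p: "p \<in> test_triples n l m"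
  obtain j A B where p_eq: "p = (j, A, B)" by (cases p) auto
  have "x \<in> space \<mu> - triple_deviation_event t n m \<eta> (j, A, B)"
    using x m p p_eq unfolding bad_event_def by blast
  then show "\<bar>(case p of (j, A, B) \<Rightarrow>
        \<bar>emp_gamma t n m j x A B - emp_mu t x j A * emp_mu t x (n - m - j + 1) B\<bar>)
      - (case p of (j, A, B) \<Rightarrow> block_covariance n m j A B)\<bar> \<le> 3 * \<eta>"
    unfolding p_eq using abs_empirical_covariance_diff_le[OF t] by simp
qed

lemma prob_bad_event_le:
  assumes summable: "alpha_summable \<mu>" and t: "0 < t" and \<eta>: "0 < \<eta>"
    and l: "1 \<le> l" and M: "M < n"
  shows "prob (bad_event t n l M \<eta>)
    \<le> real M * (4 * real n * 2^(2^(n*l - 1))) * (3 * ((1 + 2 * alpha_norm \<mu>) / (real t * \<eta>\<^sup>2)))"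
proof -
  define c where "c = 3 * ((1 + 2 * alpha_norm \<mu>) / (real t * \<eta>\<^sup>2))"
  have c: "0 \<le> c" using alpha_norm_nonneg[OF summable] by (simp add: c_def)
  have inner: "prob (\<Union>p\<in>test_triples n l m. triple_deviation_event t n m \<eta> p)
      \<le> 4 * real n * 2^(2^(n*l - 1)) * c" if m: "m \<in> {1..M}" for m
  proof -
    have "prob (\<Union>p\<in>test_triples n l m. triple_deviation_event t n m \<eta> p)
        \<le> (\<Sum>p\<in>test_triples n l m. prob (triple_deviation_event t n m \<eta> p))"
      using finite_test_triples triple_deviation_event_in_events m by (intro measure_UNION_le) auto
    also have "\<dots> \<le> (\<Sum>p\<in>test_triples n l m. c)"
      using prob_triple_deviation_event_le[OF summable t \<eta>] m by (intro sum_mono) (auto simp: c_def)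
    also have "\<dots> = real (card (test_triples n l m)) * c" by simp
    also have "\<dots> \<le> real (n * 2^(2^(n*l - 1) + 2)) * c"
    proof (rule mult_right_mono[OF _ c])
      show "real (card (test_triples n l m)) \<le> real (n * 2^(2^(n*l - 1) + 2))"
        unfolding of_nat_le_iff using card_test_triples_le[OF l, of m n] m by auto
    qed
    finally show ?thesis by (simp add: power_add)
  qed
  have "prob (bad_event t n l M \<eta>)
      \<le> (\<Sum>m\<in>{1..M}. prob (\<Union>p\<in>test_triples n l m. triple_deviation_event t n m \<eta> p))"
    unfolding bad_event_def using triple_deviation_event_in_events finite_test_triples
    by (intro measure_UNION_le) auto
  also have "\<dots> \<le> (\<Sum>m\<in>{1..M}. 4 * real n * 2^(2^(n*l - 1)) * c)" by (rule sum_mono) (rule inner)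
  finally show ?thesis by (simp add: c_def)
qed

lemma abs_sum_alpha_hat_diff_le:
  assumes "0 < t" "M < n" "x \<in> space \<mu> - bad_event t n l M \<eta>"
  shows "\<bar>(\<Sum>m=1..M. alpha_hat t n l x m) - (\<Sum>m=1..M. dyadic_alpha n l m)\<bar> \<le> real M * (3 * \<eta>)"
proof -
  have "\<bar>(\<Sum>m=1..M. alpha_hat t n l x m) - (\<Sum>m=1..M. dyadic_alpha n l m)\<bar>
      \<le> (\<Sum>m=1..M. \<bar>alpha_hat t n l x m - dyadic_alpha n l m\<bar>)"
    unfolding sum_subtractf[symmetric] by (rule sum_abs)
  also have "\<dots> \<le> (\<Sum>m=1..M. 3 * \<eta>)"
    using abs_alpha_hat_diff_le[OF assms(1) _ assms(2,3)] by (intro sum_mono) auto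
  finally show ?thesis by simp
qed

end

section \<open>Choice of the sample size\<close>

lemma kappa_ge:
  assumes "0 < \<epsilon> t" "0 < \<delta> t" "1 \<le> n t * l t"
  shows "real (M t) * (2^(2^(n t * l t - 1)))\<^sup>2 / ((\<epsilon> t)\<^sup>2 * \<delta> t) \<le> real (kappa l n M \<epsilon> \<delta> t)"
proof -
  obtain q where q: "n t * l t = Suc q" using assms(3) by (cases "n t * l t") auto
  then have "(2::real)^(2^(n t * l t)) = (2^(2^(n t * l t - 1)))\<^sup>2"
    by (simp add: power_mult[symmetric] mult.commute)
  moreover have "(2::real)^(2^(n t * l t)) \<le> 2 ^ (2^(n t * l t) + 2^(M t * l t + 1) + 1)"
    by (rule power_increasing) simp_all
  ultimately have "real (M t) * (2^(2^(n t * l t - 1)))\<^sup>2 \<le> C_const (M t) (l t) (n t)"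
    unfolding C_const_def by (intro mult_left_mono) simp_all
  then have "real (M t) * (2^(2^(n t * l t - 1)))\<^sup>2 / ((\<epsilon> t)\<^sup>2 * \<delta> t)
      \<le> C_const (M t) (l t) (n t) / ((\<epsilon> t)\<^sup>2 * \<delta> t)"
    using assms by (intro divide_right_mono) auto
  also have "\<dots> \<le> real (kappa l n M \<epsilon> \<delta> t)" unfolding kappa_def by (rule real_nat_ceiling_ge)
  finally show ?thesis .
qed

lemma kappa_pos:
  assumes "0 < \<epsilon> t" "0 < \<delta> t" "0 < M t" "1 \<le> n t * l t"
  shows "0 < kappa l n M \<epsilon> \<delta> t"
proof -
  have "0 < real (M t) * (2^(2^(n t * l t - 1)))\<^sup>2 / ((\<epsilon> t)\<^sup>2 * \<delta> t)"
    using assms by simp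
  then show ?thesis using kappa_ge[of \<epsilon> t \<delta> n l M] assms by linarith
qed

text \<open>With \<open>\<eta> = \<epsilon>/M\<close> and \<open>\<kappa> \<ge> M W\<^sup>2/(\<epsilon>\<^sup>2\<delta>)\<close>, the union bound for the bad event is
  \<open>12 V N M\<^sup>2 \<delta> / W \<le> 12 V N\<^sup>3 \<delta> / W\<close>, and \<open>N\<^sup>3 \<le> 256 W\<close>.\<close>

lemma union_bound_le_delta:
  fixes M N W \<kappa> \<epsilon> \<delta> V :: real
  assumes M: "1 \<le> M" "M \<le> N" and \<epsilon>: "0 < \<epsilon>" and \<delta>: "0 < \<delta>" and V: "0 \<le> V" and W: "0 < W"
    and N3: "N^3 \<le> 256 * W" and \<kappa>: "M * W\<^sup>2 / (\<epsilon>\<^sup>2 * \<delta>) \<le> \<kappa>"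
  shows "M * (4 * N * W) * (3 * (V / (\<kappa> * (\<epsilon> / M)\<^sup>2))) \<le> 3072 * V * \<delta>"
proof -
  have "0 < M * W\<^sup>2 / (\<epsilon>\<^sup>2 * \<delta>)" using M \<epsilon> \<delta> W by simp
  have "W\<^sup>2 / (\<delta> * M) = (M * W\<^sup>2 / (\<epsilon>\<^sup>2 * \<delta>)) * (\<epsilon> / M)\<^sup>2"
    using M \<epsilon> \<delta> by (simp add: field_simps power2_eq_square)
  also have "\<dots> \<le> \<kappa> * (\<epsilon> / M)\<^sup>2" by (rule mult_right_mono[OF \<kappa>]) simp
  finally have \<kappa>_ge: "W\<^sup>2 / (\<delta> * M) \<le> \<kappa> * (\<epsilon> / M)\<^sup>2" .
  have pos: "0 < W\<^sup>2 / (\<delta> * M)" using W \<delta> M by simp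
  moreover from pos have "0 < \<kappa> * (\<epsilon> / M)\<^sup>2" using \<kappa>_ge by linarith
  ultimately have "V / (\<kappa> * (\<epsilon> / M)\<^sup>2) \<le> V / (W\<^sup>2 / (\<delta> * M))"
    using \<kappa>_ge V by (intro divide_left_mono) (simp_all only: mult_pos_pos)
  then have "3 * (V / (\<kappa> * (\<epsilon> / M)\<^sup>2)) \<le> 3 * (V / (W\<^sup>2 / (\<delta> * M)))" by simp
  also have "\<dots> = 3 * V * \<delta> * M / W\<^sup>2" using W \<delta> M by (simp add: field_simps)
  finally have "M * (4 * N * W) * (3 * (V / (\<kappa> * (\<epsilon> / M)\<^sup>2)))
      \<le> M * (4 * N * W) * (3 * V * \<delta> * M / W\<^sup>2)"
    using M W by (intro mult_left_mono) auto
  also have "\<dots> = 12 * V * \<delta> * (M\<^sup>2 * N) / W" using W by (simp add: field_simps power2_eq_square)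
  also have "\<dots> \<le> 12 * V * \<delta> * N^3 / W"
  proof -
    have "M\<^sup>2 * N \<le> N\<^sup>2 * N" using M by (intro mult_right_mono power_mono) auto
    then show ?thesis using V \<delta> W by (intro divide_right_mono mult_left_mono) (auto simp: power3_eq_cube power2_eq_square)
  qed
  also have "\<dots> \<le> 12 * V * \<delta> * (256 * W) / W"
    using N3 V \<delta> W by (intro divide_right_mono mult_left_mono) auto
  also have "\<dots> = 3072 * V * \<delta>" using W by simp
  finally show ?thesis .
qed

context path_process
begin

lemma prob_bad_sample_le_delta:
  assumes summable: "alpha_summable \<mu>" and l: "0 < l t" and M: "0 < M t" "M t < n t"
    and \<delta>: "0 < \<delta> t" and \<epsilon>: "0 < \<epsilon> t"
  shows "prob (bad_event (kappa l n M \<epsilon> \<delta> t) (n t) (l t) (M t) (\<epsilon> t / M t))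
    \<le> 3072 * (1 + 2 * alpha_norm \<mu>) * \<delta> t"
proof -
  define V where "V = 1 + 2 * alpha_norm \<mu>"
  have nl: "1 \<le> n t * l t" using l M by (simp add: Suc_le_eq)
  have \<kappa>_pos: "0 < kappa l n M \<epsilon> \<delta> t" using \<epsilon> \<delta> M(1) nl by (rule kappa_pos)
  have "prob (bad_event (kappa l n M \<epsilon> \<delta> t) (n t) (l t) (M t) (\<epsilon> t / M t))
      \<le> real (M t) * (4 * real (n t) * 2^(2^(n t * l t - 1)))
        * (3 * (V / (real (kappa l n M \<epsilon> \<delta> t) * (\<epsilon> t / M t)\<^sup>2)))"
    unfolding V_def using prob_bad_event_le[OF summable \<kappa>_pos _ _ M(2)] \<epsilon> M l by (simp add: Suc_le_eq)
  also have "\<dots> \<le> 3072 * V * \<delta> t"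
  proof (rule union_bound_le_delta[OF _ _ \<epsilon> \<delta> _ _ cube_le_two_power_power
        kappa_ge[where M = M and n = n and l = l and \<delta> = \<delta> and \<epsilon> = \<epsilon>, OF \<epsilon> \<delta> nl]])
    show "1 \<le> real (M t)" "real (M t) \<le> real (n t)" "1 \<le> l t" "0 \<le> V"
      using M l alpha_norm_nonneg[OF summable] by (simp_all add: Suc_le_eq V_def)
  qed simp
  finally show ?thesis unfolding V_def .
qed

lemma abs_theta_diff_le:
  assumes "0 < kappa l n M \<epsilon> \<delta> t" "0 < M t" "M t < n t"
    and "x \<in> space \<mu> - bad_event (kappa l n M \<epsilon> \<delta> t) (n t) (l t) (M t) (\<epsilon> t / M t)"
  shows "\<bar>theta l n M \<epsilon> \<delta> t x - (\<Sum>m=1..M t. dyadic_alpha (n t) (l t) m)\<bar> \<le> 3 * \<epsilon> t"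
proof -
  have "real (M t) * (3 * (\<epsilon> t / real (M t))) = 3 * \<epsilon> t" using assms(2) by simp
  then show ?thesis
    using abs_sum_alpha_hat_diff_le[OF assms(1,3,4)] by (simp only: theta_def)
qed

theorem theta_tendsto_alpha_norm:
  assumes summable: "alpha_summable \<mu>"
    and l: "filterlim l at_top sequentially" "\<And>t. 0 < l t"
    and n: "filterlim n at_top sequentially"
    and M: "strict_mono M" "\<And>t. 0 < M t" "\<And>t. M t < n t"
    and \<delta>: "\<And>t. 0 < \<delta> t" "summable \<delta>" and \<epsilon>: "\<And>t. 0 < \<epsilon> t" "\<epsilon> \<longlonglongrightarrow> 0"
  shows "AE x in \<mu>. (\<lambda>t. theta l n M \<epsilon> \<delta> t x) \<longlonglongrightarrow> alpha_norm \<mu>"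
proof -
  define Bad where "Bad t = bad_event (kappa l n M \<epsilon> \<delta> t) (n t) (l t) (M t) (\<epsilon> t / M t)" for t
  have \<kappa>_pos: "0 < kappa l n M \<epsilon> \<delta> t" for t
    using l(2)[of t] M(2,3)[of t] \<delta>(1)[of t] \<epsilon>(1)[of t]
    by (intro kappa_pos[where M = M and n = n and l = l]) (simp_all add: Suc_le_eq)
  have "prob (Bad t) \<le> 3072 * (1 + 2 * alpha_norm \<mu>) * \<delta> t" for t
    unfolding Bad_def using summable l(2)[of t] M(2,3)[of t] \<delta>(1)[of t] \<epsilon>(1)[of t]
    by (rule prob_bad_sample_le_delta[where M = M and n = n and l = l and \<delta> = \<delta> and \<epsilon> = \<epsilon>])
  then have "summable (\<lambda>t. prob (Bad t))"
    by (intro summable_comparison_test[OF _ summable_mult[OF \<delta>(2)]]) auto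
  then have "AE x in \<mu>. eventually (\<lambda>t. x \<in> space \<mu> - Bad t) sequentially"
    by (rule borel_cantelli_AE1[rotated 2]) (simp_all add: Bad_def bad_event_in_events less_top[symmetric])
  then show ?thesis
  proof (rule AE_mp, intro AE_I2 impI)
    fix x assume "eventually (\<lambda>t. x \<in> space \<mu> - Bad t) sequentially"
    then have "eventually (\<lambda>t. norm (theta l n M \<epsilon> \<delta> t x - (\<Sum>m=1..M t. dyadic_alpha (n t) (l t) m))
        \<le> 3 * \<epsilon> t) sequentially"
      by eventually_elim (use abs_theta_diff_le[OF \<kappa>_pos M(2,3)] in \<open>simp add: Bad_def\<close>)
    moreover have "(\<lambda>t. 3 * \<epsilon> t) \<longlonglongrightarrow> 0" using tendsto_mult_right_zero[OF \<epsilon>(2), of 3] by simp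
    ultimately have "(\<lambda>t. theta l n M \<epsilon> \<delta> t x - (\<Sum>m=1..M t. dyadic_alpha (n t) (l t) m)) \<longlonglongrightarrow> 0"
      by (rule Lim_null_comparison)
    from tendsto_add[OF this sum_dyadic_alpha_tendsto[OF summable M(1,3) l(1) n]]
    show "(\<lambda>t. theta l n M \<epsilon> \<delta> t x) \<longlonglongrightarrow> alpha_norm \<mu>" by simp
  qed
qed

end

theorem theorem2:
  fixes \<mu> :: "(nat \<Rightarrow> real) measure"
    and l n M :: "nat \<Rightarrow> nat" and \<delta> \<epsilon> :: "nat \<Rightarrow> real"
  assumes "prob_space \<mu>" and "sets \<mu> = sets path_space"
    and "stationary \<mu>"
    and "(\<lambda>m. alpha_mix \<mu> m) \<longlonglongrightarrow> 0"
    and "alpha_summable \<mu>"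
    and "mono l" and "filterlim l at_top sequentially" and "\<And>t. l t > 0"
    and "mono n" and "filterlim n at_top sequentially" and "\<And>t. n t > 0"
    and "strict_mono M" and "\<And>t. M t > 0" and "\<And>t. n t > M t"
    and "\<And>t. \<delta> t > 0" and "summable \<delta>"
    and "\<And>t. \<epsilon> t > 0" and "\<epsilon> \<longlonglongrightarrow> 0"
  shows "AE x in \<mu>. (\<lambda>t. theta l n M \<epsilon> \<delta> t x) \<longlonglongrightarrow> alpha_norm \<mu>"
proof -
  interpret path_process \<mu> using assms(1-3) by (rule path_process.intro)
  show ?thesis using assms(5,7,8,10,12-18) by (rule theta_tendsto_alpha_norm)
qed

end
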